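(* Let $p\in(0,1)$ be a constant and $G_n\sim G(n,p)$. Let $F$ be a graph such that $\mathrm{wsat}(K_n,F)=(c_F+o(1))n$ as $n\to\infty$ for some constant $c_F\geq 0$. Then with probability tending to $1$ as $n\to\infty$, $$\mathrm{rk}\text{-}\mathrm{sat}(G_n,F)\leq\lfloor c_F\rfloor n+(\log n)^{O(1)}.$$
   Context: $G(n,p)$ is the binomial random graph on $[n]$. $\mathrm{wsat}(G,F)$ is the minimum number of edges of a spanning subgraph $H\subseteq G$ from which $G$ can be obtained by adding missing edges one at a time, each added edge creating a new copy of $F$ containing it. A matroid $M$ on $E(G)$ is weakly $F$-saturated if every copy $\tilde F$ of $F$ in $G$ is a cycle of $M$, i.e. $\mathrm{rk}_M(E(\tilde F)\setminus\{e\})=\mathrm{rk}_M(E(\tilde F))$ for all $e\in E(\tilde F)$; $\mathrm{rk}\text{-}\mathrm{sat}(G,F)$ is the maximum rank of such a matroid. The term $(\log n)^{O(1)}$ means $(\log n)^{D}$ for some constant $D$ not depending on $n$. *)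

theory Defs
  imports Complex_Main
begin

text \<open>Graphs on the vertex set [n] = {0..<n} are represented by their edge sets,
  an edge being a 2-element set of vertices.\<close>

definition all_edges :: "nat \<Rightarrow> nat set set" where
  "all_edges n = {e. \<exists>a b. a < n \<and> b < n \<and> a \<noteq> b \<and> e = {a, b}}"

definition is_graph :: "nat set \<Rightarrow> nat set set \<Rightarrow> bool" where
  "is_graph VF EF \<longleftrightarrow> finite VF \<and> EF \<subseteq> {e. \<exists>a b. a \<in> VF \<and> b \<in> VF \<and> a \<noteq> b \<and> e = {a, b}}"

definition copies :: "nat \<Rightarrow> nat set \<Rightarrow> nat set set \<Rightarrow> nat set set \<Rightarrow> nat set set set" where
  "copies n VF EF S =
     {(\<lambda>e. f ` e) ` EF | f. inj_on f VF \<and> f ` VF \<subseteq> {..<n} \<and> (\<lambda>e. f ` e) ` EF \<subseteq> S}"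

text \<open>Weak saturation process: H \<subseteq> G and the missing edges of G can be added one at a
  time, each added edge lying in a copy of F in the current graph (i.e. a new copy).\<close>

definition wsat_process :: "nat \<Rightarrow> nat set set \<Rightarrow> nat set \<Rightarrow> nat set set \<Rightarrow> nat set set \<Rightarrow> bool" where
  "wsat_process n G VF EF H \<longleftrightarrow> H \<subseteq> G \<and>
     (\<exists>es. distinct es \<and> set es = G - H \<and>
        (\<forall>i < length es. \<exists>C \<in> copies n VF EF (H \<union> set (take (Suc i) es)). es ! i \<in> C))"

definition wsat :: "nat \<Rightarrow> nat set set \<Rightarrow> nat set \<Rightarrow> nat set set \<Rightarrow> nat" where
  "wsat n G VF EF = (LEAST k. \<exists>H. wsat_process n G VF EF H \<and> card H = k)"

definition matroid :: "'a set \<Rightarrow> 'a set set \<Rightarrow> bool" where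
  "matroid E I \<longleftrightarrow> finite E \<and> I \<subseteq> Pow E \<and> {} \<in> I \<and>
     (\<forall>X Y. X \<in> I \<and> Y \<subseteq> X \<longrightarrow> Y \<in> I) \<and>
     (\<forall>X Y. X \<in> I \<and> Y \<in> I \<and> card X < card Y \<longrightarrow> (\<exists>y \<in> Y - X. insert y X \<in> I))"

definition mrank :: "'a set set \<Rightarrow> 'a set \<Rightarrow> nat" where
  "mrank I X = Max {card Y | Y. Y \<in> I \<and> Y \<subseteq> X}"

text \<open>Weakly F-saturated matroid on E(G): every copy of F in G is a cycle.\<close>

definition weakly_sat_matroid :: "nat \<Rightarrow> nat set set \<Rightarrow> nat set \<Rightarrow> nat set set \<Rightarrow> nat set set set \<Rightarrow> bool" where
  "weakly_sat_matroid n G VF EF I \<longleftrightarrow> matroid G I \<and>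
     (\<forall>C \<in> copies n VF EF G. \<forall>e \<in> C. mrank I (C - {e}) = mrank I C)"

definition rk_sat :: "nat \<Rightarrow> nat set set \<Rightarrow> nat set \<Rightarrow> nat set set \<Rightarrow> nat" where
  "rk_sat n G VF EF = Max {mrank I G | I. weakly_sat_matroid n G VF EF I}"

definition prob_Gnp :: "nat \<Rightarrow> real \<Rightarrow> (nat set set \<Rightarrow> bool) \<Rightarrow> real" where
  "prob_Gnp n p P = (\<Sum>G \<in> Pow (all_edges n).
     if P G then p ^ card G * (1 - p) ^ (card (all_edges n) - card G) else 0)"

end

theory Submission
  imports Defs "HOL-Library.Ramsey" "HOL-Real_Asymp.Real_Asymp"
begin

text \<open>
  Let k = \<lfloor>c_F\<rfloor>, fix an edge {x, y} of F, and choose m with wsat(K_(m+|V(F)|), F) < (k + 1) m.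
  With high probability G(n, p) has no independent set of size L = O(log n), and every
  injective placement of the roots of four fixed rooted patterns extends into the core
  A = [\<lceil>(ln n)^2\<rceil>]. For such G and any weakly F-saturated matroid, among any (m + L choose m)
  vertices outside A one has marginal rank at most k in the graph induced by the current
  vertex set U. Otherwise Ramsey's theorem gives an m-clique W of vertices with larger
  marginal rank, which extends by |V(F)| vertices of A to a clique K; deleting W then costs
  at least (k + 1) m in rank, while a weakly saturating edge set of K, together with the
  edges avoiding W, spans all of G[U] because the extension properties supply copies of F
  through every edge at W. Peeling such vertices one at a time bounds the rank by
  k n + (|A| + (m + L choose m))^2 = k n + (log n)^O(1).
\<close>

section \<open>Matroid rank and span\<close>

context
  fixes E :: "'a set" and I :: "'a set set"
  assumes M: "matroid E I"
begin

lemma matroid_finite_ground: "finite E"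
  using M unfolding matroid_def by blast

lemma matroid_indep_subset: "X \<in> I \<Longrightarrow> X \<subseteq> E"
  using M unfolding matroid_def by blast

lemma matroid_indep_finite: "X \<in> I \<Longrightarrow> finite X"
  using matroid_indep_subset matroid_finite_ground finite_subset by blast

lemma matroid_empty_indep: "{} \<in> I"
  using M unfolding matroid_def by blast

lemma matroid_indep_downward: "X \<in> I \<Longrightarrow> Y \<subseteq> X \<Longrightarrow> Y \<in> I"
  using M unfolding matroid_def by blast

lemma matroid_augment: "X \<in> I \<Longrightarrow> Y \<in> I \<Longrightarrow> card X < card Y \<Longrightarrow> \<exists>y\<in>Y - X. insert y X \<in> I"
  using M unfolding matroid_def by blast

lemma finite_indep_cards: "finite {card Y | Y. Y \<in> I \<and> Y \<subseteq> X}"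
proof -
  have "I \<subseteq> Pow E"
    using matroid_indep_subset by blast
  then have "finite I"
    using matroid_finite_ground finite_subset by blast
  then show ?thesis
    by (rule finite_subset[rotated, OF finite_imageI[of I card]]) blast
qed

lemma card_indep_le_mrank: "Y \<in> I \<Longrightarrow> Y \<subseteq> X \<Longrightarrow> card Y \<le> mrank I X"
  unfolding mrank_def using finite_indep_cards by (intro Max_ge) auto

lemma basis_exists:
  obtains B where "B \<in> I" "B \<subseteq> X" "card B = mrank I X"
proof -
  have "mrank I X \<in> {card Y | Y. Y \<in> I \<and> Y \<subseteq> X}"
    unfolding mrank_def using finite_indep_cards matroid_empty_indep by (intro Max_in) auto
  then show ?thesis
    using that by force
qed

lemma mrank_le_card: "X \<subseteq> E \<Longrightarrow> mrank I X \<le> card X"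
  by (metis basis_exists card_mono matroid_finite_ground rev_finite_subset)

lemma mrank_mono: "X \<subseteq> Y \<Longrightarrow> mrank I X \<le> mrank I Y"
  by (metis basis_exists card_indep_le_mrank order.trans)

lemma indep_extends_to_basis:
  assumes "J \<in> I" "J \<subseteq> X"
  obtains B where "B \<in> I" "J \<subseteq> B" "B \<subseteq> X" "card B = mrank I X"
  using assms
proof (induction "mrank I X - card J" arbitrary: J rule: less_induct)
  case less
  show ?case
  proof (cases "card J < mrank I X")
    case True
    obtain Y where Y: "Y \<in> I" "Y \<subseteq> X" "card Y = mrank I X"
      using basis_exists .
    then obtain y where y: "y \<in> Y - J" "insert y J \<in> I"
      using matroid_augment[of J Y] less.prems True by auto
    have "card (insert y J) = Suc (card J)"
      using y matroid_indep_finite[OF less.prems(2)] by simp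
    then have "mrank I X - card (insert y J) < mrank I X - card J"
      using True by simp
    moreover have "insert y J \<subseteq> X"
      using y Y less.prems(3) by blast
    ultimately show ?thesis
      using less.hyps[of "insert y J"] less.prems(1) y(2) by blast
  next
    case False
    then show ?thesis
      using less.prems card_indep_le_mrank[of J X] by auto
  qed
qed

lemma mrank_submodular:
  "mrank I (X \<union> Y) + mrank I (X \<inter> Y) \<le> mrank I X + mrank I Y"
proof -
  obtain B0 where B0: "B0 \<in> I" "B0 \<subseteq> X \<inter> Y" "card B0 = mrank I (X \<inter> Y)"
    using basis_exists .
  have "B0 \<subseteq> X \<union> Y"
    using B0(2) by blast
  then obtain B where B: "B \<in> I" "B0 \<subseteq> B" "B \<subseteq> X \<union> Y" "card B = mrank I (X \<union> Y)"
    by (rule indep_extends_to_basis[OF B0(1)])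
  have fin: "finite B"
    using matroid_indep_finite[OF B(1)] .
  have "(B \<inter> X) \<union> (B \<inter> Y) = B" "(B \<inter> X) \<inter> (B \<inter> Y) = B \<inter> X \<inter> Y"
    using B(3) by blast+
  then have "card B + card (B \<inter> X \<inter> Y) = card (B \<inter> X) + card (B \<inter> Y)"
    using card_Un_Int[of "B \<inter> X" "B \<inter> Y"] fin by simp
  moreover have "card B0 \<le> card (B \<inter> X \<inter> Y)"
    using B B0 fin by (intro card_mono) auto
  moreover have "card (B \<inter> X) \<le> mrank I X" "card (B \<inter> Y) \<le> mrank I Y"
    using B(1) by (auto intro!: card_indep_le_mrank matroid_indep_downward[OF B(1)])
  ultimately show ?thesis
    using B(4) B0(3) by linarith
qed

lemma mrank_Un_le: "Y \<subseteq> E \<Longrightarrow> mrank I (X \<union> Y) \<le> mrank I X + card Y"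
  using mrank_submodular[of X Y] mrank_le_card[of Y] by linarith

end

definition spans :: "'a set set \<Rightarrow> 'a set \<Rightarrow> 'a \<Rightarrow> bool" where
  "spans I X e \<longleftrightarrow> mrank I (insert e X) = mrank I X"

lemma spans_member: "e \<in> X \<Longrightarrow> spans I X e"
  unfolding spans_def by (simp add: insert_absorb)

context
  fixes E :: "'a set" and I :: "'a set set"
  assumes M: "matroid E I"
begin

lemma mrank_Un_spanned:
  assumes "Z \<subseteq> E" "\<forall>z\<in>Z. spans I X z"
  shows "mrank I (X \<union> Z) = mrank I X"
proof -
  have "finite Z"
    using assms(1) matroid_finite_ground[OF M] finite_subset by blast
  then show ?thesis
    using assms
  proof (induction Z rule: finite_induct)
    case (insert z Z)
    have "mrank I X \<le> mrank I ((X \<union> Z) \<inter> insert z X)"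
      by (rule mrank_mono[OF M]) blast
    then have "mrank I (X \<union> insert z Z) + mrank I X
        \<le> mrank I (X \<union> insert z Z) + mrank I ((X \<union> Z) \<inter> insert z X)"
      by simp
    also have "\<dots> \<le> mrank I (X \<union> Z) + mrank I (insert z X)"
      using mrank_submodular[OF M, of "X \<union> Z" "insert z X"]
      by (simp add: Un_insert_right Un_commute Un_left_commute)
    finally have "mrank I (X \<union> insert z Z) \<le> mrank I X"
      using insert by (simp add: spans_def)
    moreover have "mrank I X \<le> mrank I (X \<union> insert z Z)"
      by (rule mrank_mono[OF M]) blast
    ultimately show ?case
      by linarith
  qed simp
qed

lemma mrank_le_if_spans: "Y \<subseteq> E \<Longrightarrow> \<forall>y\<in>Y. spans I X y \<Longrightarrow> mrank I Y \<le> mrank I X"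
  using mrank_Un_spanned[of Y X] mrank_mono[OF M, of Y "X \<union> Y"] by simp

lemma spans_cycle_element:
  assumes "C \<subseteq> E" "e \<in> C" "mrank I (C - {e}) = mrank I C"
    and "\<forall>c\<in>C - {e}. spans I X c"
  shows "spans I X e"
proof -
  have "mrank I (C - {e}) \<le> mrank I ((X \<union> (C - {e})) \<inter> C)"
    by (rule mrank_mono[OF M]) blast
  then have "mrank I (X \<union> C) + mrank I (C - {e}) \<le> mrank I (X \<union> C) + mrank I ((X \<union> (C - {e})) \<inter> C)"
    by simp
  also have "\<dots> \<le> mrank I (X \<union> (C - {e})) + mrank I C"
  proof -
    have "X \<union> (C - {e}) \<union> C = X \<union> C"
      by blast
    then show ?thesis
      using mrank_submodular[OF M, of "X \<union> (C - {e})" C] by simp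
  qed
  also have "mrank I (X \<union> (C - {e})) = mrank I X"
    using assms(1,4) by (intro mrank_Un_spanned) auto
  finally have "mrank I (X \<union> C) \<le> mrank I X"
    using assms(3) by simp
  moreover have "mrank I (insert e X) \<le> mrank I (X \<union> C)"
    using assms(2) by (intro mrank_mono[OF M]) blast
  ultimately show ?thesis
    unfolding spans_def using mrank_mono[OF M subset_insertI[of X e]] by linarith
qed

end

section \<open>Random edge sets\<close>

definition subset_weight :: "real \<Rightarrow> 'a set \<Rightarrow> 'a set \<Rightarrow> real" where
  "subset_weight p E G = p ^ card G * (1 - p) ^ (card E - card G)"

definition subset_prob :: "real \<Rightarrow> 'a set \<Rightarrow> ('a set \<Rightarrow> bool) \<Rightarrow> real" where
  "subset_prob p E P = (\<Sum>G \<in> Pow E. if P G then subset_weight p E G else 0)"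

lemma prob_Gnp_eq_subset_prob: "prob_Gnp n p P = subset_prob p (all_edges n) P"
  unfolding prob_Gnp_def subset_prob_def subset_weight_def by simp

lemma finite_all_edges: "finite (all_edges n)"
  by (rule finite_subset[of _ "Pow {..<n}"]) (auto simp: all_edges_def)

lemma subset_weight_Un:
  assumes "finite E" "B \<subseteq> E" "X \<subseteq> B" "Y \<subseteq> E - B"
  shows "subset_weight p E (X \<union> Y) = subset_weight p B X * subset_weight p (E - B) Y"
proof -
  have fin: "finite B" "finite X" "finite Y"
    using assms by (auto intro: finite_subset)
  have "card (X \<union> Y) = card X + card Y"
    using assms fin by (intro card_Un_disjoint) auto
  moreover have "card E = card B + card (E - B)"
    using assms(1,2) by (simp add: card_Diff_subset card_mono fin(1))
  moreover have "card X \<le> card B" "card Y \<le> card (E - B)"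
    using assms fin by (auto intro: card_mono)
  ultimately have "card E - card (X \<union> Y) = (card B - card X) + (card (E - B) - card Y)"
    by simp
  then show ?thesis
    unfolding subset_weight_def \<open>card (X \<union> Y) = card X + card Y\<close> by (simp add: power_add)
qed

lemma subset_prob_independent:
  assumes "finite E" "B \<subseteq> E"
  shows "subset_prob p E (\<lambda>G. P (G \<inter> B) \<and> Q (G - B)) = subset_prob p B P * subset_prob p (E - B) Q"
proof -
  let ?h = "\<lambda>(X, Y). X \<union> Y"
  have bij: "bij_betw ?h (Pow B \<times> Pow (E - B)) (Pow E)"
  proof (rule bij_betw_byWitness[where f' = "\<lambda>G. (G \<inter> B, G - B)"])
  qed (use assms(2) in auto)
  have parts: "(X \<union> Y) \<inter> B = X" "(X \<union> Y) - B = Y" if "X \<subseteq> B" "Y \<subseteq> E - B" for X Y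
    using that by auto
  have "subset_prob p E (\<lambda>G. P (G \<inter> B) \<and> Q (G - B))
      = (\<Sum>(X, Y)\<in>Pow B \<times> Pow (E - B). if P X \<and> Q Y then subset_weight p E (X \<union> Y) else 0)"
    unfolding subset_prob_def sum.reindex_bij_betw[OF bij, symmetric]
    by (intro sum.cong) (auto simp: parts)
  also have "\<dots> = (\<Sum>(X, Y)\<in>Pow B \<times> Pow (E - B).
      (if P X then subset_weight p B X else 0) * (if Q Y then subset_weight p (E - B) Y else 0))"
    using subset_weight_Un[OF assms] by (intro sum.cong) auto
  also have "\<dots> = subset_prob p B P * subset_prob p (E - B) Q"
    unfolding subset_prob_def sum_product sum.cartesian_product by (simp add: case_prod_beta)
  finally show ?thesis .
qed

lemma subset_prob_True: "finite E \<Longrightarrow> subset_prob p E (\<lambda>_. True) = 1"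
proof (induction E rule: finite_induct)
  case (insert x E)
  have "subset_prob p (insert x E) (\<lambda>_. True) = subset_prob p {x} (\<lambda>_. True) * subset_prob p E (\<lambda>_. True)"
    using subset_prob_independent[of "insert x E" "{x}" p "\<lambda>_. True" "\<lambda>_. True"] insert by simp
  moreover have "Pow {x} = {{}, {x}}"
    by blast
  ultimately show ?case
    using insert by (simp add: subset_prob_def subset_weight_def)
qed (simp add: subset_prob_def subset_weight_def)

lemma subset_prob_exact:
  assumes "finite E" "T \<subseteq> E"
  shows "subset_prob p E (\<lambda>G. G \<inter> T = X) = (if X \<subseteq> T then subset_weight p T X else 0)"
proof -
  have "subset_prob p E (\<lambda>G. G \<inter> T = X) = subset_prob p T (\<lambda>Y. Y = X) * subset_prob p (E - T) (\<lambda>_. True)"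
    using subset_prob_independent[OF assms, of p "\<lambda>Y. Y = X" "\<lambda>_. True"] by simp
  also have "subset_prob p (E - T) (\<lambda>_. True) = 1"
    using assms(1) by (simp add: subset_prob_True)
  finally show ?thesis
    unfolding subset_prob_def using finite_subset[OF assms(2,1)] by (simp add: sum.delta)
qed

lemma subset_prob_superset: "finite E \<Longrightarrow> T \<subseteq> E \<Longrightarrow> subset_prob p E (\<lambda>G. T \<subseteq> G) = p ^ card T"
  using subset_prob_exact[of E T p T] by (simp add: Int_absorb1 subset_weight_def inf.absorb_iff2)

lemma subset_prob_disjoint: "finite E \<Longrightarrow> T \<subseteq> E \<Longrightarrow> subset_prob p E (\<lambda>G. G \<inter> T = {}) = (1 - p) ^ card T"
  using subset_prob_exact[of E T p "{}"] by (simp add: subset_weight_def)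

lemma subset_prob_not: "finite E \<Longrightarrow> subset_prob p E (\<lambda>G. \<not> P G) = 1 - subset_prob p E P"
  using subset_prob_True[of E p] unfolding subset_prob_def
  by (simp add: eq_diff_eq sum.distrib[symmetric] if_distrib cong: if_cong)

context
  fixes p :: real
  assumes p: "0 \<le> p" "p \<le> 1"
begin

lemma subset_prob_nonneg: "0 \<le> subset_prob p E P"
  unfolding subset_prob_def subset_weight_def using p by (intro sum_nonneg) auto

lemma subset_prob_mono:
  "finite E \<Longrightarrow> (\<And>G. G \<subseteq> E \<Longrightarrow> P G \<Longrightarrow> Q G) \<Longrightarrow> subset_prob p E P \<le> subset_prob p E Q"
  unfolding subset_prob_def subset_weight_def using p by (intro sum_mono) auto

lemma subset_prob_disj_le:
  "subset_prob p E (\<lambda>G. P G \<or> Q G) \<le> subset_prob p E P + subset_prob p E Q"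
  unfolding subset_prob_def subset_weight_def using p
  by (subst sum.distrib[symmetric]) (intro sum_mono, auto)

lemma subset_prob_Bex_le:
  "finite J \<Longrightarrow> subset_prob p E (\<lambda>G. \<exists>j\<in>J. P j G) \<le> (\<Sum>j\<in>J. subset_prob p E (P j))"
proof (induction J rule: finite_induct)
  case (insert j J)
  then show ?case
    using subset_prob_disj_le[of E "P j" "\<lambda>G. \<exists>i\<in>J. P i G"] by simp
qed (simp add: subset_prob_def)

end

lemma subset_prob_no_block:
  fixes k :: nat
  assumes "finite E" "\<forall>j<k. T j \<subseteq> E" "\<forall>i<k. \<forall>j<k. i \<noteq> j \<longrightarrow> T i \<inter> T j = {}"
  shows "subset_prob p E (\<lambda>G. \<forall>j<k. \<not> T j \<subseteq> G) = (\<Prod>j<k. 1 - p ^ card (T j))"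
  using assms
proof (induction k arbitrary: E)
  case 0
  then show ?case
    by (simp add: subset_prob_True)
next
  case (Suc k)
  have B: "T k \<subseteq> E" "finite (T k)"
    using Suc.prems by (auto intro: finite_subset)
  have disj: "T j \<inter> T k = {}" "T j \<subseteq> E - T k" if "j < k" for j
    using Suc.prems(2)[rule_format, of j] Suc.prems(3)[rule_format, of j k] that by auto
  have "subset_prob p E (\<lambda>G. \<forall>j<Suc k. \<not> T j \<subseteq> G)
      = subset_prob p E (\<lambda>G. \<not> T k \<subseteq> G \<inter> T k \<and> (\<forall>j<k. \<not> T j \<subseteq> G - T k))"
  proof (intro arg_cong[where f = "subset_prob p E"] ext)
    fix G
    have "T j \<subseteq> G \<longleftrightarrow> T j \<subseteq> G - T k" if "j < k" for j
      using disj(1)[OF that] by blast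
    then show "(\<forall>j<Suc k. \<not> T j \<subseteq> G) = (\<not> T k \<subseteq> G \<inter> T k \<and> (\<forall>j<k. \<not> T j \<subseteq> G - T k))"
      by (auto simp: less_Suc_eq)
  qed
  also have "\<dots> = subset_prob p (T k) (\<lambda>X. \<not> T k \<subseteq> X) * subset_prob p (E - T k) (\<lambda>Y. \<forall>j<k. \<not> T j \<subseteq> Y)"
    by (rule subset_prob_independent[OF Suc.prems(1) B(1)])
  also have "subset_prob p (T k) (\<lambda>X. \<not> T k \<subseteq> X) = 1 - p ^ card (T k)"
    using B by (simp add: subset_prob_not subset_prob_superset)
  also have "subset_prob p (E - T k) (\<lambda>Y. \<forall>j<k. \<not> T j \<subseteq> Y) = (\<Prod>j<k. 1 - p ^ card (T j))"
    using Suc.prems disj(2) by (intro Suc.IH) auto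
  finally show ?case
    by (simp add: mult.commute)
qed

definition whp :: "real \<Rightarrow> (nat \<Rightarrow> nat set set \<Rightarrow> bool) \<Rightarrow> bool" where
  "whp p P \<longleftrightarrow> (\<lambda>n. prob_Gnp n p (P n)) \<longlonglongrightarrow> 1"

context
  fixes p :: real
  assumes p: "0 \<le> p" "p \<le> 1"
begin

lemma whp_iff_failure_tendsto_0:
  "whp p P \<longleftrightarrow> (\<lambda>n. prob_Gnp n p (\<lambda>G. \<not> P n G)) \<longlonglongrightarrow> 0"
proof -
  have "prob_Gnp n p (\<lambda>G. \<not> P n G) = 1 - prob_Gnp n p (P n)" for n
    unfolding prob_Gnp_eq_subset_prob using p by (intro subset_prob_not) (auto simp: all_edges_def)
  then show ?thesis
    unfolding whp_def using LIM_zero_iff[of "\<lambda>n. prob_Gnp n p (P n)" 1 sequentially]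
      tendsto_minus_cancel_left[of "\<lambda>n. prob_Gnp n p (P n) - 1" 0 sequentially] by simp
qed

lemma whp_if_failure_le:
  assumes "eventually (\<lambda>n. prob_Gnp n p (\<lambda>G. \<not> P n G) \<le> f n) sequentially" "f \<longlonglongrightarrow> 0"
  shows "whp p P"
  unfolding whp_iff_failure_tendsto_0
proof (rule tendsto_sandwich[OF _ assms(1) tendsto_const assms(2)])
  show "eventually (\<lambda>n. 0 \<le> prob_Gnp n p (\<lambda>G. \<not> P n G)) sequentially"
    unfolding prob_Gnp_eq_subset_prob using p by (simp add: subset_prob_nonneg)
qed

lemma whp_conj:
  assumes "whp p P" "whp p Q"
  shows "whp p (\<lambda>n G. P n G \<and> Q n G)"
proof (rule whp_if_failure_le)
  show "eventually (\<lambda>n. prob_Gnp n p (\<lambda>G. \<not> (P n G \<and> Q n G))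
      \<le> prob_Gnp n p (\<lambda>G. \<not> P n G) + prob_Gnp n p (\<lambda>G. \<not> Q n G)) sequentially"
    unfolding prob_Gnp_eq_subset_prob de_Morgan_conj
    by (intro always_eventually allI subset_prob_disj_le[OF p])
  show "(\<lambda>n. prob_Gnp n p (\<lambda>G. \<not> P n G) + prob_Gnp n p (\<lambda>G. \<not> Q n G)) \<longlonglongrightarrow> 0"
    using assms tendsto_add_zero unfolding whp_iff_failure_tendsto_0 by blast
qed

lemma whp_mono:
  assumes "whp p P" "eventually (\<lambda>n. \<forall>G \<subseteq> all_edges n. P n G \<longrightarrow> Q n G) sequentially"
  shows "whp p Q"
proof (rule whp_if_failure_le)
  show "eventually (\<lambda>n. prob_Gnp n p (\<lambda>G. \<not> Q n G) \<le> prob_Gnp n p (\<lambda>G. \<not> P n G)) sequentially"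
    using assms(2) unfolding prob_Gnp_eq_subset_prob
  proof eventually_elim
    case (elim n)
    show ?case
      using elim by (intro subset_prob_mono[OF p]) (auto simp: all_edges_def)
  qed
  show "(\<lambda>n. prob_Gnp n p (\<lambda>G. \<not> P n G)) \<longlonglongrightarrow> 0"
    using assms(1) unfolding whp_iff_failure_tendsto_0 .
qed

end

section \<open>Extension properties of G(n, p)\<close>

definition log_sq :: "nat \<Rightarrow> nat" where
  "log_sq n = nat \<lceil>ln (real n) ^ 2\<rceil>"

lemma log_sq_bounds: "ln (real n) ^ 2 \<le> real (log_sq n)" "real (log_sq n) \<le> ln (real n) ^ 2 + 1"
  unfolding log_sq_def by linarith (simp add: of_nat_nat)

lemma eventually_log_sq_le: "eventually (\<lambda>n. log_sq n \<le> n) sequentially"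
proof -
  have "eventually (\<lambda>n. ln (real n) ^ 2 + 1 \<le> real n) sequentially"
    by real_asymp
  then show ?thesis
  proof eventually_elim
    case (elim n)
    then have "real (log_sq n) \<le> real n"
      using log_sq_bounds(2)[of n] by linarith
    then show ?case
      by simp
  qed
qed

lemma eventually_extension_failure_le:
  fixes s r :: nat and q :: real
  assumes q: "0 < q" "q \<le> 1" and r: "0 < r"
  shows "eventually (\<lambda>n. real n ^ s * (1 - q) ^ ((log_sq n - s) div r) \<le> 1 / real n) sequentially"
proof -
  have "eventually (\<lambda>n. real n ^ s * exp (- q * ((ln (real n) ^ 2 - s) / r - 1)) \<le> 1 / real n) sequentially"
    using q r by real_asymp
  then show ?thesis
  proof eventually_elim
    case (elim n)
    define k where "k = (log_sq n - s) div r"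
    have "(ln (real n) ^ 2 - s) / r - 1 \<le> real (log_sq n - s) / r - 1"
      using log_sq_bounds(1)[of n] r by (intro diff_right_mono divide_right_mono) linarith+
    also have "\<dots> \<le> real k"
      using real_of_int_floor_gt_diff_one[of "real (log_sq n - s) / r"]
      unfolding k_def floor_divide_of_nat_eq by simp
    finally have "(1 - q) ^ k \<le> exp (- q * ((ln (real n) ^ 2 - s) / r - 1))"
    proof -
      assume "(ln (real n) ^ 2 - s) / r - 1 \<le> real k"
      have "(1 - q) ^ k \<le> exp (- q) ^ k"
        using q by (intro power_mono) (auto simp: exp_ge_add_one_self[of "-q", simplified])
      also have "\<dots> = exp (- q * real k)"
        by (simp add: exp_of_nat_mult[symmetric] mult.commute)
      also have "\<dots> \<le> exp (- q * ((ln (real n) ^ 2 - s) / r - 1))"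
        using q \<open>(ln (real n) ^ 2 - s) / r - 1 \<le> real k\<close> by simp
      finally show ?thesis .
    qed
    then show ?case
      using elim unfolding k_def[symmetric] by (smt (verit) mult_left_mono zero_le_power of_nat_0_le_iff)
  qed
qed

definition extendable ::
    "nat set set \<Rightarrow> nat set \<Rightarrow> nat set \<Rightarrow> nat set set \<Rightarrow> nat set \<Rightarrow> (nat \<Rightarrow> nat) \<Rightarrow> bool" where
  "extendable G A VP EP S \<phi> \<longleftrightarrow> (\<exists>\<psi>. inj_on \<psi> VP \<and> (\<forall>v\<in>S. \<psi> v = \<phi> v) \<and> \<psi> ` (VP - S) \<subseteq> A - \<phi> ` S
      \<and> (\<forall>e\<in>EP. \<not> e \<subseteq> S \<longrightarrow> \<psi> ` e \<in> G))"

definition extension_property ::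
    "nat \<Rightarrow> nat set set \<Rightarrow> nat set \<Rightarrow> nat set \<Rightarrow> nat set set \<Rightarrow> nat set \<Rightarrow> bool" where
  "extension_property n G A VP EP S \<longleftrightarrow>
     (\<forall>\<phi>. inj_on \<phi> S \<longrightarrow> \<phi> ` S \<subseteq> {..<n} \<longrightarrow> extendable G A VP EP S \<phi>)"

lemma is_graph_edge:
  "is_graph V E \<Longrightarrow> e \<in> E \<Longrightarrow> \<exists>a b. a \<in> V \<and> b \<in> V \<and> a \<noteq> b \<and> e = {a, b}"
  unfolding is_graph_def by blast

lemma is_graph_edge_subset: "is_graph V E \<Longrightarrow> e \<in> E \<Longrightarrow> e \<subseteq> V"
  unfolding is_graph_def by blast

lemma is_graph_finite: "is_graph V E \<Longrightarrow> finite V" "is_graph V E \<Longrightarrow> finite E"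
  unfolding is_graph_def by (auto intro: finite_subset[of E "Pow V"])

text \<open>Trial number j places the i-th vertex of VP - S on the (j r + i)-th vertex of A - \<phi> ` S,
  where r = card (VP - S); distinct trials use disjoint sets of new vertices.\<close>

lemma disjoint_placements:
  assumes "finite A" "finite VP" "inj_on \<phi> S" "VP - S \<noteq> {}"
  defines "k \<equiv> card (A - \<phi> ` S) div card (VP - S)"
  obtains \<psi> where "\<And>j. j < k \<Longrightarrow> inj_on (\<psi> j) VP" "\<And>j v. v \<in> S \<Longrightarrow> \<psi> j v = \<phi> v"
    "\<And>j. j < k \<Longrightarrow> \<psi> j ` (VP - S) \<subseteq> A - \<phi> ` S"
    "\<And>i j. i < k \<Longrightarrow> j < k \<Longrightarrow> i \<noteq> j \<Longrightarrow> \<psi> i ` (VP - S) \<inter> \<psi> j ` (VP - S) = {}"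
proof -
  define A' where "A' = A - \<phi> ` S"
  define r where "r = card (VP - S)"
  have r: "0 < r"
    unfolding r_def using assms(2,4) by (simp add: card_gt_0_iff)
  obtain g where g: "bij_betw g {0..<card A'} A'"
    using ex_bij_betw_nat_finite[of A'] assms(1) unfolding A'_def by blast
  obtain h where h: "bij_betw h (VP - S) {0..<r}"
    using ex_bij_betw_finite_nat[of "VP - S"] assms(2) unfolding r_def by blast
  define \<psi> where "\<psi> j v = (if v \<in> S then \<phi> v else g (j * r + h v))" for j v
  have idx: "j * r + h v < card A'" if "j < k" "v \<in> VP - S" for j v
  proof -
    have "j * r + h v < Suc j * r"
      using h that(2) bij_betwE by fastforce
    also have "\<dots> \<le> k * r"
      using that(1) by (intro mult_right_mono) auto
    also have "\<dots> \<le> card A'"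
      unfolding k_def A'_def r_def[symmetric] by simp
    finally show ?thesis .
  qed
  have new: "\<psi> j v \<in> A'" if "j < k" "v \<in> VP - S" for j v
    using idx[OF that] g that(2) unfolding \<psi>_def by (auto dest: bij_betwE)
  have idx_inj: "j * r + h v = j' * r + h v' \<Longrightarrow> j = j' \<and> v = v'"
    if "v \<in> VP - S" "v' \<in> VP - S" for j j' v v'
  proof -
    assume eq: "j * r + h v = j' * r + h v'"
    have "h v < r" "h v' < r"
      using h that bij_betwE by fastforce+
    then have "(j * r + h v) div r = j" "(j' * r + h v') div r = j'"
      using r by auto
    then have "j = j'"
      using eq by simp
    then show ?thesis
      using eq h that by (auto dest: bij_betw_imp_inj_on inj_onD)
  qed
  have g_eq: "j * r + h v = j' * r + h v'"
    if "j < k" "j' < k" "v \<in> VP - S" "v' \<in> VP - S" "\<psi> j v = \<psi> j' v'" for j j' v v'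
    using that idx[OF that(1,3)] idx[OF that(2,4)] bij_betw_imp_inj_on[OF g]
    unfolding \<psi>_def by (auto dest: inj_onD)
  show ?thesis
  proof
    show "inj_on (\<psi> j) VP" if "j < k" for j
    proof (rule inj_onI)
      fix u v assume uv: "u \<in> VP" "v \<in> VP" "\<psi> j u = \<psi> j v"
      have old: "\<psi> j w \<in> \<phi> ` S" if "w \<in> S" for w
        using that unfolding \<psi>_def by simp
      consider "u \<in> S" "v \<in> S" | "u \<notin> S" "v \<notin> S" | "u \<in> S \<longleftrightarrow> v \<notin> S"
        by blast
      then show "u = v"
      proof cases
        case 1
        then show ?thesis
          using uv(3) assms(3) unfolding \<psi>_def by (auto dest: inj_onD)
      next
        case 2
        then show ?thesis
          using uv idx_inj g_eq[OF that that] by blast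
      next
        case 3
        then show ?thesis
          using uv old new[OF that] unfolding A'_def by (metis DiffD1 DiffD2 DiffI)
      qed
    qed
    show "\<psi> j v = \<phi> v" if "v \<in> S" for j v
      using that unfolding \<psi>_def by simp
    show "\<psi> j ` (VP - S) \<subseteq> A - \<phi> ` S" if "j < k" for j
      using new[OF that] by (simp add: A'_def image_subset_iff)
    show "\<psi> i ` (VP - S) \<inter> \<psi> j ` (VP - S) = {}" if "i < k" "j < k" "i \<noteq> j" for i j
      using g_eq[OF that(1,2)] idx_inj that(3) by blast
  qed
qed

lemma placed_edges_disjoint:
  assumes F: "is_graph VP EP" and S: "\<forall>v\<in>S. \<psi> v = \<phi> v" "\<forall>v\<in>S. \<psi>' v = \<phi> v"
    and new: "\<psi> ` (VP - S) \<inter> \<phi> ` S = {}" "\<psi> ` (VP - S) \<inter> \<psi>' ` (VP - S) = {}"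
  shows "(\<lambda>e. \<psi> ` e) ` {e \<in> EP. \<not> e \<subseteq> S} \<inter> (\<lambda>e. \<psi>' ` e) ` {e \<in> EP. \<not> e \<subseteq> S} = {}"
proof (rule ccontr)
  assume "\<not> ?thesis"
  then obtain e e' where e: "e \<in> EP" "\<not> e \<subseteq> S" "e' \<in> EP" and eq: "\<psi> ` e = \<psi>' ` e'"
    by blast
  obtain v where v: "v \<in> e" "v \<notin> S"
    using e(2) by blast
  obtain v' where v': "v' \<in> e'" "\<psi> v = \<psi>' v'"
    using eq v(1) by blast
  have "v \<in> VP" "v' \<in> VP"
    using is_graph_edge_subset[OF F] e v(1) v'(1) by blast+
  then show False
    using S new v(2) v'(2) by (cases "v' \<in> S") (auto simp: disjoint_iff)
qed

lemma not_extendable_prob_le: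
  assumes F: "is_graph VP EP" and S: "S \<subseteq> VP" "VP - S \<noteq> {}"
    and \<phi>: "inj_on \<phi> S" "\<phi> ` S \<subseteq> {..<n}" and "a \<le> n" and p: "0 \<le> p" "p \<le> 1"
  shows "subset_prob p (all_edges n) (\<lambda>G. \<not> extendable G {..<a} VP EP S \<phi>)
      \<le> (1 - p ^ card EP) ^ ((a - card S) div card (VP - S))"
proof -
  define k where "k = card ({..<a} - \<phi> ` S) div card (VP - S)"
  obtain \<psi> where \<psi>: "\<And>j. j < k \<Longrightarrow> inj_on (\<psi> j) VP" "\<And>j v. v \<in> S \<Longrightarrow> \<psi> j v = \<phi> v"
    "\<And>j. j < k \<Longrightarrow> \<psi> j ` (VP - S) \<subseteq> {..<a} - \<phi> ` S"
    "\<And>i j. i < k \<Longrightarrow> j < k \<Longrightarrow> i \<noteq> j \<Longrightarrow> \<psi> i ` (VP - S) \<inter> \<psi> j ` (VP - S) = {}"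
    using disjoint_placements[OF _ is_graph_finite(1)[OF F] \<phi>(1) S(2)] unfolding k_def by blast
  define T where "T j = (\<lambda>e. \<psi> j ` e) ` {e \<in> EP. \<not> e \<subseteq> S}" for j
  have T_edges: "T j \<subseteq> all_edges n" if "j < k" for j
  proof
    fix t assume "t \<in> T j"
    then obtain e where e: "e \<in> EP" "t = \<psi> j ` e"
      unfolding T_def by blast
    then obtain u v where "u \<in> VP" "v \<in> VP" "u \<noteq> v" "e = {u, v}"
      using is_graph_edge[OF F] by blast
    moreover have "\<psi> j w < n" if "w \<in> VP" for w
    proof (cases "w \<in> S")
      case True
      then show ?thesis
        using \<psi>(2) \<phi>(2) by fastforce
    next
      case False
      then have "\<psi> j w \<in> {..<a}"
        using \<psi>(3)[OF \<open>j < k\<close>] that by blast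
      then show ?thesis
        using \<open>a \<le> n\<close> by simp
    qed
    ultimately show "t \<in> all_edges n"
      using e \<psi>(1)[OF that] unfolding all_edges_def by (auto dest: inj_onD)
  qed
  have T_disjoint: "T i \<inter> T j = {}" if "i < k" "j < k" "i \<noteq> j" for i j
    unfolding T_def using \<psi>(2) \<psi>(3)[OF that(1)] \<psi>(4)[OF that]
    by (intro placed_edges_disjoint[OF F]) auto
  have extendable_if_block: "extendable G {..<a} VP EP S \<phi>" if "j < k" "T j \<subseteq> G" for j G
    unfolding extendable_def
  proof (intro exI conjI)
    show "inj_on (\<psi> j) VP" "\<forall>v\<in>S. \<psi> j v = \<phi> v" "\<psi> j ` (VP - S) \<subseteq> {..<a} - \<phi> ` S"
      using \<psi>(1-3) that(1) by auto
    show "\<forall>e\<in>EP. \<not> e \<subseteq> S \<longrightarrow> \<psi> j ` e \<in> G"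
      using that(2) unfolding T_def by blast
  qed
  then have "subset_prob p (all_edges n) (\<lambda>G. \<not> extendable G {..<a} VP EP S \<phi>)
      \<le> subset_prob p (all_edges n) (\<lambda>G. \<forall>j<k. \<not> T j \<subseteq> G)"
    by (intro subset_prob_mono[OF p finite_all_edges]) (use extendable_if_block in blast)
  also have "\<dots> = (\<Prod>j<k. 1 - p ^ card (T j))"
    using T_edges T_disjoint by (intro subset_prob_no_block finite_all_edges) auto
  also have "\<dots> \<le> (\<Prod>j<k. 1 - p ^ card EP)"
  proof (rule prod_mono)
    fix j
    have "card (T j) \<le> card {e \<in> EP. \<not> e \<subseteq> S}"
      unfolding T_def using is_graph_finite(2)[OF F] by (intro card_image_le) simp
    also have "\<dots> \<le> card EP"
      using is_graph_finite(2)[OF F] by (intro card_mono) auto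
    finally have "card (T j) \<le> card EP" .
    then show "0 \<le> 1 - p ^ card (T j) \<and> 1 - p ^ card (T j) \<le> 1 - p ^ card EP"
      using p by (auto intro: power_decreasing power_le_one)
  qed
  also have "\<dots> \<le> (1 - p ^ card EP) ^ ((a - card S) div card (VP - S))"
  proof -
    have "finite S"
      using S(1) is_graph_finite(1)[OF F] finite_subset by blast
    then have "a - card S \<le> card ({..<a} - \<phi> ` S)"
      using diff_card_le_card_Diff[of "\<phi> ` S" "{..<a}"] card_image[OF \<phi>(1)] by simp
    then have "(a - card S) div card (VP - S) \<le> k"
      unfolding k_def by (rule div_le_mono)
    then show ?thesis
      using p by (simp add: power_decreasing power_le_one)
  qed
  finally show ?thesis .
qed

lemma extension_property_failure_le:
  assumes F: "is_graph VP EP" and S: "S \<subseteq> VP" "VP - S \<noteq> {}" and "a \<le> n" and p: "0 \<le> p" "p \<le> 1"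
  shows "prob_Gnp n p (\<lambda>G. \<not> extension_property n G {..<a} VP EP S)
      \<le> real n ^ card S * (1 - p ^ card EP) ^ ((a - card S) div card (VP - S))"
proof -
  define \<Phi> where "\<Phi> = {\<phi> \<in> S \<rightarrow>\<^sub>E {..<n}. inj_on \<phi> S}"
  have fin: "finite S"
    using S(1) is_graph_finite(1)[OF F] finite_subset by blast
  have "finite \<Phi>" "card \<Phi> \<le> n ^ card S"
    using card_mono[of "S \<rightarrow>\<^sub>E {..<n}" \<Phi>] fin unfolding \<Phi>_def
    by (auto simp: card_PiE finite_PiE)
  have "prob_Gnp n p (\<lambda>G. \<not> extension_property n G {..<a} VP EP S)
      \<le> subset_prob p (all_edges n) (\<lambda>G. \<exists>\<phi>\<in>\<Phi>. \<not> extendable G {..<a} VP EP S \<phi>)"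
    unfolding prob_Gnp_eq_subset_prob
  proof (rule subset_prob_mono[OF p finite_all_edges])
    fix G assume "\<not> extension_property n G {..<a} VP EP S"
    then obtain \<phi> where "inj_on \<phi> S" "\<phi> ` S \<subseteq> {..<n}" "\<not> extendable G {..<a} VP EP S \<phi>"
      unfolding extension_property_def by blast
    moreover have "extendable G {..<a} VP EP S (restrict \<phi> S) = extendable G {..<a} VP EP S \<phi>"
      unfolding extendable_def by (simp cong: image_cong)
    ultimately show "\<exists>\<phi>\<in>\<Phi>. \<not> extendable G {..<a} VP EP S \<phi>"
      unfolding \<Phi>_def by (intro bexI[of _ "restrict \<phi> S"]) (auto simp: inj_on_def)
  qed
  also have "\<dots> \<le> (\<Sum>\<phi>\<in>\<Phi>. subset_prob p (all_edges n) (\<lambda>G. \<not> extendable G {..<a} VP EP S \<phi>))"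
    by (rule subset_prob_Bex_le[OF p \<open>finite \<Phi>\<close>])
  also have "\<dots> \<le> (\<Sum>\<phi>\<in>\<Phi>. (1 - p ^ card EP) ^ ((a - card S) div card (VP - S)))"
  proof (rule sum_mono)
    fix \<phi> assume "\<phi> \<in> \<Phi>"
    then have "inj_on \<phi> S" "\<phi> ` S \<subseteq> {..<n}"
      unfolding \<Phi>_def by auto
    then show "subset_prob p (all_edges n) (\<lambda>G. \<not> extendable G {..<a} VP EP S \<phi>)
        \<le> (1 - p ^ card EP) ^ ((a - card S) div card (VP - S))"
      by (rule not_extendable_prob_le[OF F S _ _ \<open>a \<le> n\<close> p])
  qed
  also have "\<dots> \<le> real n ^ card S * (1 - p ^ card EP) ^ ((a - card S) div card (VP - S))"
    using \<open>card \<Phi> \<le> n ^ card S\<close> p by (simp add: mult_right_mono power_le_one of_nat_le_iff[symmetric])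
  finally show ?thesis .
qed

lemma extension_property_whp:
  assumes F: "is_graph VP EP" and S: "S \<subseteq> VP" and p: "0 < p" "p \<le> 1"
  shows "whp p (\<lambda>n G. extension_property n G {..<log_sq n} VP EP S)"
proof (cases "VP - S = {}")
  case True
  then have "VP = S"
    using S by blast
  have "extendable G A VP EP S \<phi>" if "inj_on \<phi> S" for G A \<phi>
    unfolding extendable_def \<open>VP = S\<close> using that is_graph_edge_subset[OF F] \<open>VP = S\<close>
    by (intro exI[of _ \<phi>]) auto
  then show ?thesis
    unfolding whp_def extension_property_def
    by (simp add: prob_Gnp_eq_subset_prob subset_prob_True finite_all_edges)
next
  case False
  have "0 < p ^ card EP" "p ^ card EP \<le> 1" "0 < card (VP - S)"
    using p False is_graph_finite(1)[OF F] by (auto simp: power_le_one card_gt_0_iff)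
  note failure_le = eventually_extension_failure_le[OF this, of "card S"]
  have "eventually (\<lambda>n. prob_Gnp n p (\<lambda>G. \<not> extension_property n G {..<log_sq n} VP EP S)
      \<le> 1 / real n) sequentially"
    using eventually_log_sq_le failure_le
  proof eventually_elim
    case (elim n)
    then show ?case
      using extension_property_failure_le[OF F S False elim(1), of p] p by linarith
  qed
  then show ?thesis
    using p by (intro whp_if_failure_le[OF _ _ _ lim_const_over_n]) auto
qed

section \<open>Independent sets of G(n, p)\<close>

definition no_indep_of_size :: "nat \<Rightarrow> nat set set \<Rightarrow> nat \<Rightarrow> bool" where
  "no_indep_of_size n G L \<longleftrightarrow> (\<forall>S \<subseteq> {..<n}. card S = L \<longrightarrow> \<not> indep S G)"

text \<open>Chosen so that n ^ L * (1 - p) ^ (L choose 2) \<le> 1 / n, making an independent set of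
  size L unlikely by the union bound.\<close>

definition indep_bound :: "real \<Rightarrow> nat \<Rightarrow> nat" where
  "indep_bound p n = nat \<lceil>4 / (- ln (1 - p)) * ln (real n)\<rceil> + 2"

lemma choose_le_pow: "n choose k \<le> n ^ k"
  by (cases "k \<le> n") (auto simp: binomial_le_pow binomial_eq_0)

lemma real_choose_two: "real (L choose 2) = real L * (real L - 1) / 2"
  by (induction L) (simp_all add: numeral_2_eq_2 field_simps)

lemma indep_failure_le:
  assumes p: "0 \<le> p" "p \<le> 1"
  shows "prob_Gnp n p (\<lambda>G. \<not> no_indep_of_size n G L) \<le> real n ^ L * (1 - p) ^ (L choose 2)"
proof -
  define Ss where "Ss = {S. S \<subseteq> {..<n} \<and> card S = L}"
  define T where "T S = {e. e \<subseteq> S \<and> card e = 2}" for S :: "nat set"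
  have T: "T S \<subseteq> all_edges n" "card (T S) = L choose 2" if "S \<in> Ss" for S
    using that n_subsets[of S 2] finite_subset[of S "{..<n}"]
    unfolding T_def Ss_def all_edges_def by (auto simp: card_2_iff)
  have indep_iff: "indep S G \<longleftrightarrow> G \<inter> T S = {}" for S G
    unfolding indep_def T_def by (auto simp: card_2_iff)
  have "prob_Gnp n p (\<lambda>G. \<not> no_indep_of_size n G L)
      = subset_prob p (all_edges n) (\<lambda>G. \<exists>S\<in>Ss. G \<inter> T S = {})"
    unfolding prob_Gnp_eq_subset_prob no_indep_of_size_def Ss_def
    by (intro arg_cong[where f = "subset_prob p (all_edges n)"] ext) (auto simp: indep_iff)
  also have "\<dots> \<le> (\<Sum>S\<in>Ss. subset_prob p (all_edges n) (\<lambda>G. G \<inter> T S = {}))"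
    unfolding Ss_def by (rule subset_prob_Bex_le[OF p]) simp
  also have "\<dots> = real (card Ss) * (1 - p) ^ (L choose 2)"
    using T by (simp add: subset_prob_disjoint finite_all_edges)
  also have "\<dots> \<le> real n ^ L * (1 - p) ^ (L choose 2)"
    using n_subsets[of "{..<n}" L] choose_le_pow[of n L] p unfolding Ss_def
    by (intro mult_right_mono) (simp_all add: of_nat_le_iff[symmetric] del: of_nat_le_iff)
  finally show ?thesis .
qed

lemma no_indep_whp:
  assumes p: "0 < p" "p < 1"
  shows "whp p (\<lambda>n G. no_indep_of_size n G (indep_bound p n))"
proof (rule whp_if_failure_le[OF _ _ _ lim_const_over_n])
  define \<beta> where "\<beta> = - ln (1 - p)"
  have \<beta>: "0 < \<beta>" "1 - p = exp (- \<beta>)"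
    unfolding \<beta>_def using p by auto
  show "eventually (\<lambda>n. prob_Gnp n p (\<lambda>G. \<not> no_indep_of_size n G (indep_bound p n)) \<le> 1 / real n) sequentially"
    using eventually_ge_at_top[of 1]
  proof eventually_elim
    case (elim n)
    define L where "L = indep_bound p n"
    define y where "y = ln (real n)"
    have y: "0 \<le> y" "real n = exp y"
      unfolding y_def using elim by auto
    have L_eq: "real L = real (nat \<lceil>4 / \<beta> * y\<rceil>) + 2"
      unfolding L_def indep_bound_def \<beta>_def[symmetric] y_def[symmetric] by simp
    have "4 / \<beta> * y \<le> real (nat \<lceil>4 / \<beta> * y\<rceil>)"
      by linarith
    then have "\<beta> * (4 / \<beta> * y) \<le> \<beta> * (real L - 1)"
      unfolding L_eq using \<beta>(1) by (intro mult_left_mono) auto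
    then have L: "1 \<le> real L" "4 * y \<le> \<beta> * (real L - 1)"
      using \<beta>(1) L_eq by auto
    have "real L * y - \<beta> * real (L choose 2) = real L * (y - \<beta> * (real L - 1) / 2)"
      unfolding real_choose_two by (simp add: algebra_simps)
    also have "\<dots> \<le> real L * (- y)"
      using L by (intro mult_left_mono) auto
    also have "\<dots> \<le> - y"
      using L y by (simp add: mult_le_cancel_right1)
    finally have "exp (real L * y) * exp (- \<beta> * real (L choose 2)) \<le> exp (- y)"
      by (simp add: exp_add[symmetric])
    moreover have "real n ^ L * (1 - p) ^ (L choose 2) = exp (real L * y) * exp (- \<beta> * real (L choose 2))"
      unfolding y(2) \<beta>(2) by (simp add: exp_of_nat_mult[symmetric] mult.commute)
    ultimately show ?case
      using indep_failure_le[of p n L] p y(2) unfolding L_def by (simp add: exp_minus inverse_eq_divide)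
  qed
qed (use p in auto)

section \<open>Weakly saturated matroids on graphs with the extension properties\<close>

definition induced_edges :: "nat set set \<Rightarrow> nat set \<Rightarrow> nat set set" where
  "induced_edges G U = {e \<in> G. e \<subseteq> U}"

definition edges_to :: "nat set set \<Rightarrow> nat \<Rightarrow> nat set \<Rightarrow> nat set set" where
  "edges_to G w A = {e \<in> G. \<exists>z\<in>A. e = {w, z}}"

definition neighbours :: "nat set set \<Rightarrow> nat \<Rightarrow> nat set" where
  "neighbours E x = {v. {x, v} \<in> E}"

definition bipartite_edges :: "nat set \<Rightarrow> nat set \<Rightarrow> nat set set" where
  "bipartite_edges X Y = {{u, v} | u v. u \<in> X \<and> v \<in> Y}"

lemma induced_edges_mono: "U \<subseteq> U' \<Longrightarrow> induced_edges G U \<subseteq> induced_edges G U'"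
  unfolding induced_edges_def by blast

lemma neighbours_graph:
  assumes "is_graph V E"
  shows "neighbours E x \<subseteq> V" "x \<notin> neighbours E x"
proof -
  show "neighbours E x \<subseteq> V"
    using is_graph_edge_subset[OF assms] unfolding neighbours_def by blast
  show "x \<notin> neighbours E x"
  proof
    assume "x \<in> neighbours E x"
    then obtain a b where "a \<noteq> b" "{x} = {a, b}"
      using is_graph_edge[OF assms, of "{x}"] unfolding neighbours_def by auto
    then show False
      by (simp add: singleton_insert_inj_eq)
  qed
qed

lemma extendableE:
  assumes "extension_property n G A VP EP S" "inj_on \<phi> S" "\<phi> ` S \<subseteq> {..<n}"
  obtains \<psi> where "inj_on \<psi> VP" "\<And>v. v \<in> S \<Longrightarrow> \<psi> v = \<phi> v" "\<psi> ` (VP - S) \<subseteq> A - \<phi> ` S"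
    "\<And>e. e \<in> EP \<Longrightarrow> \<not> e \<subseteq> S \<Longrightarrow> \<psi> ` e \<in> G"
proof -
  have "extendable G A VP EP S \<phi>"
    using assms unfolding extension_property_def by blast
  then obtain \<psi> where "inj_on \<psi> VP" "\<forall>v\<in>S. \<psi> v = \<phi> v" "\<psi> ` (VP - S) \<subseteq> A - \<phi> ` S"
    "\<forall>e\<in>EP. \<not> e \<subseteq> S \<longrightarrow> \<psi> ` e \<in> G"
    unfolding extendable_def by blast
  then show ?thesis
    by (intro that) auto
qed

lemma clique_image_edge:
  assumes "inj_on \<beta> {..<N}" "clique (\<beta> ` {..<N}) G" "e \<in> all_edges N"
  shows "\<beta> ` e \<in> G"
proof -
  obtain i j where ij: "i < N" "j < N" "i \<noteq> j" "e = {i, j}"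
    using assms(3) unfolding all_edges_def by blast
  then have "\<beta> i \<noteq> \<beta> j"
    using assms(1) by (auto dest: inj_onD)
  then show ?thesis
    using assms(2) ij unfolding clique_def by auto
qed

locale wsat_matroid =
  fixes n :: nat and G :: "nat set set" and VF :: "nat set" and EF :: "nat set set"
    and I :: "nat set set set"
  assumes weakly_sat: "weakly_sat_matroid n G VF EF I"
    and G_edges: "G \<subseteq> all_edges n"
    and F_graph: "is_graph VF EF"
begin

lemma matroid: "matroid G I"
  using weakly_sat unfolding weakly_sat_matroid_def by blast

lemma G_edge: "e \<in> G \<Longrightarrow> \<exists>a b. a < n \<and> b < n \<and> a \<noteq> b \<and> e = {a, b}"
  using G_edges unfolding all_edges_def by blast

lemma spans_embedded_copy:
  assumes X: "X \<subseteq> G" and \<psi>: "inj_on \<psi> VF" "\<psi> ` VF \<subseteq> {..<n}" "\<forall>f\<in>EF. \<psi> ` f \<in> G"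
    and e: "e \<in> EF" and others: "\<forall>f\<in>EF. \<psi> ` f \<noteq> \<psi> ` e \<longrightarrow> spans I X (\<psi> ` f)"
  shows "spans I X (\<psi> ` e)"
proof -
  let ?C = "(\<lambda>f. \<psi> ` f) ` EF"
  have C: "?C \<in> copies n VF EF G"
    unfolding copies_def using \<psi> by blast
  show ?thesis
  proof (rule spans_cycle_element[OF matroid])
    show "?C \<subseteq> G" "\<psi> ` e \<in> ?C"
      using \<psi>(3) e by auto
    show "mrank I (?C - {\<psi> ` e}) = mrank I ?C"
      using weakly_sat C e unfolding weakly_sat_matroid_def by blast
    show "\<forall>c\<in>?C - {\<psi> ` e}. spans I X c"
      using others by blast
  qed
qed

text \<open>Induction along the order in which the saturation process adds the edges of K_N - H.\<close>

lemma spans_clique_edges: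
  assumes H: "wsat_process N (all_edges N) VF EF H"
    and \<beta>: "inj_on \<beta> {..<N}" "\<beta> ` {..<N} \<subseteq> {..<n}" "clique (\<beta> ` {..<N}) G"
    and X: "X \<subseteq> G" "(\<lambda>e. \<beta> ` e) ` H \<subseteq> X" and e: "e \<in> all_edges N"
  shows "spans I X (\<beta> ` e)"
proof -
  obtain es where es: "set es = all_edges N - H"
    "\<And>i. i < length es \<Longrightarrow> \<exists>C \<in> copies N VF EF (H \<union> set (take (Suc i) es)). es ! i \<in> C"
    using H unfolding wsat_process_def by blast
  have H_sub: "H \<subseteq> all_edges N"
    using H unfolding wsat_process_def by blast
  have image_in_G: "\<beta> ` d \<in> G" if "d \<in> all_edges N" for d
    using clique_image_edge[OF \<beta>(1,3) that] .
  have "spans I X (\<beta> ` (es ! i))" if "i < length es" for i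
    using that
  proof (induction i rule: less_induct)
    case (less i)
    obtain C where C: "C \<in> copies N VF EF (H \<union> set (take (Suc i) es))" "es ! i \<in> C"
      using es(2)[OF less.prems] by blast
    then obtain f where f: "inj_on f VF" "f ` VF \<subseteq> {..<N}" "C = (\<lambda>d. f ` d) ` EF"
      "C \<subseteq> H \<union> set (take (Suc i) es)"
      unfolding copies_def by blast
    obtain e0 where e0: "e0 \<in> EF" "es ! i = f ` e0"
      using C(2) f(3) by blast
    have C_edges: "C \<subseteq> all_edges N"
      using f(4) H_sub es(1) set_take_subset[of "Suc i" es] by blast
    have prev: "d \<in> H \<or> (\<exists>j<i. d = es ! j)" if "d \<in> C" "d \<noteq> es ! i" for d
    proof -
      have "d \<in> H \<union> set (take i es)"
        using f(4) that less.prems by (auto simp: take_Suc_conv_app_nth)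
      then show ?thesis
        using less.prems by (auto simp: in_set_conv_nth)
    qed
    have "spans I X ((\<beta> \<circ> f) ` e0)"
    proof (rule spans_embedded_copy[OF X(1)])
      show "inj_on (\<beta> \<circ> f) VF" "(\<beta> \<circ> f) ` VF \<subseteq> {..<n}"
        using f(1,2) \<beta>(1,2) by (auto intro: comp_inj_on inj_on_subset)
      show "\<forall>d\<in>EF. (\<beta> \<circ> f) ` d \<in> G"
      proof
        fix d assume "d \<in> EF"
        then have "f ` d \<in> all_edges N"
          using C_edges f(3) by blast
        then show "(\<beta> \<circ> f) ` d \<in> G"
          using image_in_G[of "f ` d"] by (simp add: image_image)
      qed
      show "\<forall>d\<in>EF. (\<beta> \<circ> f) ` d \<noteq> (\<beta> \<circ> f) ` e0 \<longrightarrow> spans I X ((\<beta> \<circ> f) ` d)"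
      proof (intro ballI impI)
        fix d assume d: "d \<in> EF" "(\<beta> \<circ> f) ` d \<noteq> (\<beta> \<circ> f) ` e0"
        have "f ` d \<in> C"
          using f(3) d(1) by blast
        moreover have "f ` d \<noteq> es ! i"
          using d(2) e0(2) by (metis image_comp)
        ultimately consider "f ` d \<in> H" | j where "j < i" "f ` d = es ! j"
          using prev by blast
        then show "spans I X ((\<beta> \<circ> f) ` d)"
        proof cases
          case 1
          then have "\<beta> ` f ` d \<in> X"
            using X(2) by blast
          then show ?thesis
            by (metis image_comp spans_member)
        next
          case 2
          then show ?thesis
            using less.IH[of j] less.prems by (metis image_comp order.strict_trans)
        qed
      qed
    qed (use e0 in auto)
    then show ?case
      using e0(2) by (simp add: image_image)
  qed
  moreover have "e \<in> H \<or> e \<in> set es"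
    using e es(1) by blast
  ultimately show ?thesis
    using X(2) by (auto simp: in_set_conv_nth intro: spans_member)
qed

lemma F_edge: "f \<in> EF \<Longrightarrow> \<exists>a b. a \<in> VF \<and> b \<in> VF \<and> a \<noteq> b \<and> f = {a, b}"
  using is_graph_edge[OF F_graph] .

lemma F_edge_at:
  assumes "f \<in> EF" "x \<in> f"
  obtains v where "v \<in> neighbours EF x" "v \<noteq> x" "f = {x, v}"
proof -
  obtain a b where "a \<noteq> b" "f = {a, b}"
    using F_edge[OF assms(1)] by blast
  then obtain v where "v \<noteq> x" "f = {x, v}"
    using assms(2) by (metis insert_commute insert_iff singletonD)
  then show ?thesis
    using that assms(1) unfolding neighbours_def by blast
qed

lemma F_edge_inside:
  assumes "f \<in> EF" "f \<subseteq> {x, y}" "x \<noteq> y"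
  shows "f = {x, y}"
  using F_edge[OF assms(1)] assms(2,3) by auto

lemma G_edge_ne: "{a, b} \<in> G \<Longrightarrow> a \<noteq> b"
  using G_edge by (metis doubleton_eq_iff insert_absorb2)

end

locale core_setting = wsat_matroid +
  fixes x y :: nat and A Z0 :: "nat set"
  assumes edge_xy: "{x, y} \<in> EF" and x_ne_y: "x \<noteq> y" and A_sub: "A \<subseteq> {..<n}"
    and Z0: "finite Z0" "VF \<inter> Z0 = {}" "card Z0 = card VF"
    and ext_edge: "extension_property n G A VF EF {x, y}"
    and ext_nbrs: "extension_property n G A VF EF (insert x (neighbours EF x))"
    and ext_fan: "extension_property n G A (VF \<union> Z0)
      (EF \<union> bipartite_edges Z0 (neighbours EF x - {y})) ({x, y} \<union> Z0)"
begin

lemma xy_in_VF: "x \<in> VF" "y \<in> VF"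
  using is_graph_edge_subset[OF F_graph edge_xy] by auto

text \<open>Map x to w and y to z and extend into A: the other edges of the resulting copy of F
  either join w to A or avoid w.\<close>

lemma spans_edge_outside_core:
  assumes U: "A \<subseteq> U" "U \<subseteq> {..<n}" and wz: "w \<in> U - A" "z \<in> U - A" "{w, z} \<in> G"
  shows "spans I (induced_edges G (U - {w}) \<union> edges_to G w A) {w, z}"
proof -
  let ?X = "induced_edges G (U - {w}) \<union> edges_to G w A"
  define \<phi> where "\<phi> v = (if v = x then w else z)" for v
  have "w \<noteq> z"
    using G_edge_ne wz(3) .
  then have \<phi>: "inj_on \<phi> {x, y}" "\<phi> ` {x, y} \<subseteq> {..<n}"
    using x_ne_y wz U unfolding \<phi>_def by (auto simp: inj_on_def)
  obtain \<psi> where \<psi>: "inj_on \<psi> VF" "\<And>v. v \<in> {x, y} \<Longrightarrow> \<psi> v = \<phi> v"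
    "\<psi> ` (VF - {x, y}) \<subseteq> A - \<phi> ` {x, y}" "\<And>f. f \<in> EF \<Longrightarrow> \<not> f \<subseteq> {x, y} \<Longrightarrow> \<psi> ` f \<in> G"
    using extendableE[OF ext_edge \<phi>] by blast
  have \<psi>xy: "\<psi> x = w" "\<psi> y = z"
    using \<psi>(2) x_ne_y unfolding \<phi>_def by auto
  have \<psi>A: "\<psi> v \<in> A" if "v \<in> VF" "v \<noteq> x" "v \<noteq> y" for v
    using \<psi>(3) that by blast
  have "spans I ?X (\<psi> ` {x, y})"
  proof (rule spans_embedded_copy[OF _ \<psi>(1) _ _ edge_xy])
    show "?X \<subseteq> G"
      unfolding induced_edges_def edges_to_def by blast
    show "\<psi> ` VF \<subseteq> {..<n}"
      using \<psi>xy \<psi>A wz U by (force simp: image_subset_iff)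
    show G: "\<forall>f\<in>EF. \<psi> ` f \<in> G"
    proof
      fix f assume f: "f \<in> EF"
      show "\<psi> ` f \<in> G"
      proof (cases "f \<subseteq> {x, y}")
        case True
        then show ?thesis
          using F_edge_inside[OF f _ x_ne_y] \<psi>xy wz(3) by simp
      qed (use \<psi>(4) f in blast)
    qed
    show "\<forall>f\<in>EF. \<psi> ` f \<noteq> \<psi> ` {x, y} \<longrightarrow> spans I ?X (\<psi> ` f)"
    proof (intro ballI impI spans_member)
      fix f assume f: "f \<in> EF" "\<psi> ` f \<noteq> \<psi> ` {x, y}"
      show "\<psi> ` f \<in> ?X"
      proof (cases "x \<in> f")
        case True
        then obtain v where v: "v \<in> neighbours EF x" "v \<noteq> x" "f = {x, v}"
          using F_edge_at f(1) by blast
        then have "v \<noteq> y" "v \<in> VF"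
          using f(2) neighbours_graph[OF F_graph] by auto
        then show ?thesis
          using \<psi>A[of v] G f(1) v(2,3) \<psi>xy unfolding edges_to_def by auto
      next
        case False
        then have "\<psi> ` f \<subseteq> insert z A"
          using \<psi>A \<psi>xy is_graph_edge_subset[OF F_graph f(1)] by blast
        moreover have "w \<notin> insert z A"
          using wz \<open>w \<noteq> z\<close> by blast
        ultimately show ?thesis
          using G f(1) U wz(2) unfolding induced_edges_def by blast
      qed
    qed
  qed
  then show ?thesis
    using \<psi>xy by simp
qed

lemma mrank_induced_remove_vertex:
  assumes U: "A \<subseteq> U" "U \<subseteq> {..<n}" and w: "w \<in> U - A"
  shows "mrank I (induced_edges G U) = mrank I (induced_edges G (U - {w}) \<union> edges_to G w A)"
proof (rule antisym)
  let ?X = "induced_edges G (U - {w}) \<union> edges_to G w A"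
  show "mrank I ?X \<le> mrank I (induced_edges G U)"
    using U w by (intro mrank_mono[OF matroid]) (auto simp: induced_edges_def edges_to_def)
  have "spans I ?X e" if e: "e \<in> induced_edges G U" for e
  proof (cases "w \<in> e")
    case True
    obtain a b where "a \<noteq> b" "e = {a, b}"
      using e G_edge unfolding induced_edges_def by blast
    then obtain z where z: "e = {w, z}" "z \<in> U"
      using True e unfolding induced_edges_def by auto
    show ?thesis
    proof (cases "z \<in> A")
      case True
      then show ?thesis
        using e z(1) unfolding induced_edges_def edges_to_def by (blast intro: spans_member)
    next
      case False
      then show ?thesis
        using spans_edge_outside_core[OF U w, of z] e z unfolding induced_edges_def by auto
    qed
  next
    case False
    then show ?thesis
      using e unfolding induced_edges_def by (blast intro: spans_member)
  qed
  then show "mrank I (induced_edges G U) \<le> mrank I ?X"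
    by (intro mrank_le_if_spans[OF matroid]) (auto simp: induced_edges_def)
qed

text \<open>Additive form of: the marginal rank of w in U is at most its marginal rank in U'.
  Both are carried by the edges from w to A, so this is submodularity.\<close>

lemma marginal_mono:
  assumes U: "A \<subseteq> U'" "U' \<subseteq> U" "U \<subseteq> {..<n}" and w: "w \<in> U' - A"
  shows "mrank I (induced_edges G U) + mrank I (induced_edges G (U' - {w}))
    \<le> mrank I (induced_edges G (U - {w})) + mrank I (induced_edges G U')"
proof -
  let ?S = "edges_to G w A"
  have "mrank I (induced_edges G U) + mrank I (induced_edges G (U' - {w}))
      = mrank I (induced_edges G (U - {w}) \<union> ?S) + mrank I (induced_edges G (U' - {w}))"
    using mrank_induced_remove_vertex[of U w] U w by auto
  also have "\<dots> \<le> mrank I (induced_edges G (U - {w}) \<union> ?S)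
      + mrank I (induced_edges G (U - {w}) \<inter> (induced_edges G (U' - {w}) \<union> ?S))"
    using U by (intro add_left_mono mrank_mono[OF matroid]) (auto simp: induced_edges_def)
  also have "induced_edges G (U - {w}) \<union> ?S = induced_edges G (U - {w}) \<union> (induced_edges G (U' - {w}) \<union> ?S)"
    using U by (auto simp: induced_edges_def)
  also have "mrank I \<dots> + mrank I (induced_edges G (U - {w}) \<inter> (induced_edges G (U' - {w}) \<union> ?S))
      \<le> mrank I (induced_edges G (U - {w})) + mrank I (induced_edges G (U' - {w}) \<union> ?S)"
    by (rule mrank_submodular[OF matroid])
  also have "mrank I (induced_edges G (U' - {w}) \<union> ?S) \<le> mrank I (induced_edges G U')"
    using U w by (intro mrank_mono[OF matroid]) (auto simp: induced_edges_def edges_to_def)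
  finally show ?thesis
    by simp
qed

lemma sum_marginals_le:
  assumes U: "A \<subseteq> U" "U \<subseteq> {..<n}" and W: "W \<subseteq> U - A" "finite W"
  shows "mrank I (induced_edges G (U - W))
    + (\<Sum>w\<in>W. mrank I (induced_edges G U) - mrank I (induced_edges G (U - {w})))
    \<le> mrank I (induced_edges G U)"
  using W(2,1)
proof (induction W rule: finite_induct)
  case (insert w W)
  have "mrank I (induced_edges G U) + mrank I (induced_edges G (U - W - {w}))
      \<le> mrank I (induced_edges G (U - {w})) + mrank I (induced_edges G (U - W))"
    using insert.prems insert.hyps U by (intro marginal_mono) auto
  moreover have "mrank I (induced_edges G (U - {w})) \<le> mrank I (induced_edges G U)"
    by (intro mrank_mono[OF matroid] induced_edges_mono) blast
  moreover have "U - insert w W = U - W - {w}"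
    by blast
  ultimately show ?case
    using insert by simp
qed simp

end

lemma pin_two_points:
  assumes "inj_on \<zeta> V" "\<zeta> ` V \<subseteq> Z" "w \<notin> Z" "u \<notin> Z" "w \<noteq> u" "x \<noteq> y" "x \<notin> V" "y \<notin> V"
  defines "\<phi> \<equiv> \<lambda>v. if v = x then w else if v = y then u else \<zeta> v"
  shows "inj_on \<phi> ({x, y} \<union> V)" "\<phi> ` ({x, y} \<union> V) = {w, u} \<union> \<zeta> ` V"
proof -
  have on_V: "\<phi> ` V = \<zeta> ` V" "inj_on \<phi> V"
    using assms(1,7,8) unfolding \<phi>_def inj_on_def by (auto cong: image_cong)
  have on_xy: "\<phi> ` {x, y} = {w, u}" "inj_on \<phi> {x, y}"
    using assms(5,6) unfolding \<phi>_def by auto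
  show "\<phi> ` ({x, y} \<union> V) = {w, u} \<union> \<zeta> ` V"
    unfolding image_Un on_V(1) on_xy(1) ..
  have "{x, y} - V = {x, y}" "V - {x, y} = V"
    using assms(7,8) by auto
  then show "inj_on \<phi> ({x, y} \<union> V)"
    unfolding inj_on_Un using on_V on_xy assms(2-4) by auto
qed

locale clique_extension = core_setting +
  fixes U W Z :: "nat set" and X :: "nat set set"
  assumes A_sub_U: "A \<subseteq> U" and U_sub: "U \<subseteq> {..<n}" and W_sub: "W \<subseteq> U - A"
    and Z_sub: "Z \<subseteq> A" and card_Z: "card Z = card VF" and clique_WZ: "clique (W \<union> Z) G"
    and X_sub: "X \<subseteq> G" and induced_sub_X: "induced_edges G (U - W) \<subseteq> X"
    and spans_clique: "\<And>q q'. q \<in> W \<union> Z \<Longrightarrow> q' \<in> W \<union> Z \<Longrightarrow> q \<noteq> q' \<Longrightarrow> spans I X {q, q'}"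
begin

lemma finite_Z: "finite Z"
  using Z_sub A_sub by (meson finite_lessThan finite_subset)

lemma W_Z_disjoint: "w \<in> W \<Longrightarrow> w \<notin> A" "w \<in> W \<Longrightarrow> w \<notin> Z"
  using W_sub Z_sub by auto

lemma spans_if_avoids_W: "e \<in> G \<Longrightarrow> e \<subseteq> U - W \<Longrightarrow> spans I X e"
  using induced_sub_X unfolding induced_edges_def by (blast intro: spans_member)

lemma spans_via_copy:
  assumes \<psi>: "inj_on \<psi> VF" "\<forall>f\<in>EF. \<psi> ` f \<in> G" "\<psi> x = w" "\<psi> y = u"
    and w: "w \<in> W" and far: "\<And>v. v \<in> VF \<Longrightarrow> v \<noteq> x \<Longrightarrow> \<psi> v \<in> U - W"
    and at_w: "\<And>v. v \<in> neighbours EF x \<Longrightarrow> v \<noteq> y \<Longrightarrow> spans I X {w, \<psi> v}"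
  shows "spans I X {w, u}"
proof -
  have "spans I X (\<psi> ` {x, y})"
  proof (rule spans_embedded_copy[OF X_sub \<psi>(1) _ \<psi>(2) edge_xy])
    show "\<psi> ` VF \<subseteq> {..<n}"
      using far \<psi>(3) w W_sub U_sub by (force simp: image_subset_iff)
    show "\<forall>f\<in>EF. \<psi> ` f \<noteq> \<psi> ` {x, y} \<longrightarrow> spans I X (\<psi> ` f)"
    proof (intro ballI impI)
      fix f assume f: "f \<in> EF" "\<psi> ` f \<noteq> \<psi> ` {x, y}"
      show "spans I X (\<psi> ` f)"
      proof (cases "x \<in> f")
        case True
        then obtain v where "v \<in> neighbours EF x" "f = {x, v}"
          using F_edge_at f(1) by blast
        then show ?thesis
          using at_w[of v] f(2) \<psi>(3) by auto
      next
        case False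
        then have "\<psi> ` f \<subseteq> U - W"
          using far is_graph_edge_subset[OF F_graph f(1)] by blast
        then show ?thesis
          using \<psi>(2) f(1) spans_if_avoids_W by blast
      qed
    qed
  qed
  then show ?thesis
    using \<psi>(3,4) by simp
qed

text \<open>Map x to w, y to u and the other neighbours of x into Z, then extend into A: the edges
  of the copy at w other than {w, u} lie in the clique W \<union> Z.\<close>

lemma spans_edge_to_Z_neighbour:
  assumes w: "w \<in> W" and u: "u \<in> A - Z" "{w, u} \<in> G" "\<forall>z\<in>Z. {u, z} \<in> G"
  shows "spans I X {w, u}"
proof -
  let ?N = "neighbours EF x"
  obtain \<zeta> where \<zeta>: "\<zeta> ` VF \<subseteq> Z" "inj_on \<zeta> VF"
    using card_le_inj[of VF Z] is_graph_finite(1)[OF F_graph] finite_Z card_Z by auto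
  have N: "?N \<subseteq> VF" "x \<notin> ?N" "y \<in> ?N"
    using neighbours_graph[OF F_graph] edge_xy unfolding neighbours_def by auto
  have wu: "w \<notin> Z" "u \<notin> Z" "w \<noteq> u"
    using W_Z_disjoint w u by auto
  define \<phi> where "\<phi> = (\<lambda>v. if v = x then w else if v = y then u else \<zeta> v)"
  have N_split: "insert x ?N = {x, y} \<union> (?N - {y})"
    using N by auto
  have \<phi>: "inj_on \<phi> (insert x ?N)" "\<phi> ` insert x ?N = {w, u} \<union> \<zeta> ` (?N - {y})"
    unfolding N_split \<phi>_def using wu x_ne_y N \<zeta>
    by (intro pin_two_points; auto intro: inj_on_subset)+
  have \<phi>_Z: "\<phi> v \<in> Z" if "v \<in> ?N" "v \<noteq> y" for v
    using that N \<zeta>(1) unfolding \<phi>_def by auto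
  let ?Q = "insert w (insert u Z)"
  have \<phi>_img: "\<phi> ` insert x ?N \<subseteq> ?Q"
    using \<phi>(2) \<zeta>(1) N(1) by auto
  have Q: "?Q \<subseteq> {..<n}"
    using w u W_sub Z_sub A_sub U_sub by auto
  have Q_edges: "{q, q'} \<in> G" if "q \<in> ?Q" "q' \<in> ?Q" "q \<noteq> q'" for q q'
    using that clique_WZ w u(2,3) unfolding clique_def by (auto simp: insert_commute)
  obtain \<psi> where \<psi>: "inj_on \<psi> VF" "\<And>v. v \<in> insert x ?N \<Longrightarrow> \<psi> v = \<phi> v"
    "\<psi> ` (VF - insert x ?N) \<subseteq> A - \<phi> ` insert x ?N"
    "\<And>f. f \<in> EF \<Longrightarrow> \<not> f \<subseteq> insert x ?N \<Longrightarrow> \<psi> ` f \<in> G"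
    using extendableE[OF ext_nbrs \<phi>(1)] \<phi>_img Q by blast
  have \<psi>xy: "\<psi> x = w" "\<psi> y = u"
    using \<psi>(2) N x_ne_y unfolding \<phi>_def by auto
  have \<psi>_far: "\<psi> v \<in> insert u (Z \<union> A)" if "v \<in> VF" "v \<noteq> x" for v
  proof (cases "v \<in> ?N")
    case True
    then show ?thesis
      using \<psi>(2)[of v] \<phi>_Z[of v] \<psi>xy by (cases "v = y") auto
  next
    case False
    then show ?thesis
      using \<psi>(3) that by blast
  qed
  have G: "\<forall>f\<in>EF. \<psi> ` f \<in> G"
  proof
    fix f assume f: "f \<in> EF"
    show "\<psi> ` f \<in> G"
    proof (cases "f \<subseteq> insert x ?N")
      case True
      obtain a b where ab: "a \<in> VF" "b \<in> VF" "a \<noteq> b" "f = {a, b}"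
        using F_edge[OF f] by blast
      then have "\<psi> a \<noteq> \<psi> b"
        using \<psi>(1) by (metis inj_onD)
      moreover have "\<psi> a \<in> ?Q" "\<psi> b \<in> ?Q"
        using True ab(4) \<psi>(2)[of a] \<psi>(2)[of b] \<phi>_img by blast+
      ultimately show ?thesis
        using Q_edges ab(4) by simp
    qed (use \<psi>(4) f in blast)
  qed
  show ?thesis
  proof (rule spans_via_copy[OF \<psi>(1) G \<psi>xy w])
    show "\<psi> v \<in> U - W" if "v \<in> VF" "v \<noteq> x" for v
      using \<psi>_far[OF that] u A_sub_U Z_sub W_sub by blast
    show "spans I X {w, \<psi> v}" if "v \<in> ?N" "v \<noteq> y" for v
    proof -
      have "\<psi> v \<in> Z"
        using \<psi>(2) \<phi>_Z that by auto
      moreover have "w \<noteq> \<psi> v"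
        using \<open>\<psi> v \<in> Z\<close> wu(1) by blast
      ultimately show ?thesis
        using spans_clique[of w "\<psi> v"] w by simp
    qed
  qed
qed

text \<open>Map x to w, y to u and Z0 onto Z, then extend into A: the edges between Z0 and the
  other neighbours of x put those onto common neighbours of Z in A, so the previous lemma
  spans the edges of the copy at w.\<close>

lemma spans_edge_from_W:
  assumes w: "w \<in> W" and u: "u \<in> U - W - Z" "{w, u} \<in> G"
  shows "spans I X {w, u}"
proof -
  let ?N = "neighbours EF x"
  let ?S = "{x, y} \<union> Z0"
  obtain \<zeta> where \<zeta>: "bij_betw \<zeta> Z0 Z"
    using finite_same_card_bij[OF Z0(1) finite_Z] Z0(3) card_Z by auto
  have xy_Z0: "x \<notin> Z0" "y \<notin> Z0"
    using xy_in_VF Z0(2) by auto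
  have wu: "w \<notin> Z" "u \<notin> Z" "w \<noteq> u"
    using W_Z_disjoint w u by auto
  define \<phi> where "\<phi> = (\<lambda>v. if v = x then w else if v = y then u else \<zeta> v)"
  have \<phi>: "inj_on \<phi> ?S" "\<phi> ` ?S = {w, u} \<union> \<zeta> ` Z0"
    unfolding \<phi>_def using wu x_ne_y xy_Z0 bij_betwE[OF \<zeta>] bij_betw_imp_inj_on[OF \<zeta>]
    by (intro pin_two_points; auto)+
  have \<phi>_img: "\<phi> ` ?S = insert w (insert u Z)"
    using \<phi>(2) bij_betw_imp_surj_on[OF \<zeta>] by simp
  have \<phi>_Z0: "\<phi> v = \<zeta> v" if "v \<in> Z0" for v
    using that xy_Z0 unfolding \<phi>_def by auto
  have Q: "insert w (insert u Z) \<subseteq> {..<n}"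
    using w u W_sub Z_sub A_sub U_sub by auto
  obtain \<psi> where \<psi>: "inj_on \<psi> (VF \<union> Z0)" "\<And>v. v \<in> ?S \<Longrightarrow> \<psi> v = \<phi> v"
    "\<psi> ` (VF \<union> Z0 - ?S) \<subseteq> A - \<phi> ` ?S"
    "\<And>f. f \<in> EF \<union> bipartite_edges Z0 (?N - {y}) \<Longrightarrow> \<not> f \<subseteq> ?S \<Longrightarrow> \<psi> ` f \<in> G"
    using extendableE[OF ext_fan \<phi>(1)] \<phi>_img Q by blast
  have \<psi>xy: "\<psi> x = w" "\<psi> y = u"
    using \<psi>(2) x_ne_y unfolding \<phi>_def by auto
  have \<psi>_A: "\<psi> v \<in> A - Z" if "v \<in> VF" "v \<noteq> x" "v \<noteq> y" for v
    using \<psi>(3) \<phi>_img that Z0(2) by blast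
  have outside_S: "\<not> f \<subseteq> ?S" if "f \<in> EF" "f \<noteq> {x, y}" for f
    using that F_edge_inside[of f x y] x_ne_y Z0(2) is_graph_edge_subset[OF F_graph] by blast
  have G: "\<psi> ` f \<in> G" if "f \<in> EF" for f
    using \<psi>(4)[of f] outside_S[of f] that \<psi>xy u(2) by (cases "f = {x, y}") auto
  have nbr: "spans I X {w, \<psi> v}" if v: "v \<in> ?N" "v \<noteq> y" for v
  proof (rule spans_edge_to_Z_neighbour[OF w])
    have "v \<in> VF" "v \<noteq> x"
      using v neighbours_graph[OF F_graph] by auto
    then show "\<psi> v \<in> A - Z"
      using \<psi>_A v(2) by blast
    show "{w, \<psi> v} \<in> G"
      using G[of "{x, v}"] v(1) \<psi>xy unfolding neighbours_def by simp
    show "\<forall>z\<in>Z. {\<psi> v, z} \<in> G"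
    proof
      fix z assume "z \<in> Z"
      then obtain z0 where z0: "z0 \<in> Z0" "\<zeta> z0 = z"
        using bij_betw_imp_surj_on[OF \<zeta>] by blast
      have "{z0, v} \<in> bipartite_edges Z0 (?N - {y})"
        unfolding bipartite_edges_def using z0(1) v by blast
      moreover have "v \<notin> ?S"
        using \<open>v \<in> VF\<close> \<open>v \<noteq> x\<close> v(2) Z0(2) by blast
      ultimately have "\<psi> ` {z0, v} \<in> G"
        using \<psi>(4) by blast
      then show "{\<psi> v, z} \<in> G"
        using \<psi>(2)[of z0] \<phi>_Z0[OF z0(1)] z0 by (simp add: insert_commute)
    qed
  qed
  show ?thesis
  proof (rule spans_via_copy[OF _ _ \<psi>xy w _ nbr])
    show "inj_on \<psi> VF"
      using \<psi>(1) by (rule inj_on_subset) blast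
    show "\<forall>f\<in>EF. \<psi> ` f \<in> G"
      using G by blast
    show "\<psi> v \<in> U - W" if "v \<in> VF" "v \<noteq> x" for v
      using \<psi>_A[OF that] \<psi>xy u A_sub_U W_sub by (cases "v = y") auto
  qed
qed

lemma spans_induced_edges: "e \<in> induced_edges G U \<Longrightarrow> spans I X e"
proof -
  assume e: "e \<in> induced_edges G U"
  then obtain a b where ab: "a \<noteq> b" "e = {a, b}" "e \<subseteq> U" "e \<in> G"
    using G_edge unfolding induced_edges_def by blast
  show ?thesis
  proof (cases "e \<inter> W = {}")
    case True
    then show ?thesis
      using ab spans_if_avoids_W by blast
  next
    case False
    then obtain w u where wu: "w \<in> W" "e = {w, u}" "w \<noteq> u"
      using ab by (auto simp: insert_commute)
    show ?thesis
    proof (cases "u \<in> W \<union> Z")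
      case True
      then show ?thesis
        using spans_clique wu by blast
    next
      case False
      then show ?thesis
        using spans_edge_from_W[OF wu(1)] wu(2) ab(3,4) by auto
    qed
  qed
qed

end

context core_setting
begin

text \<open>Deleting a clique W that extends to a clique W \<union> Z with Z \<subseteq> A costs at most the weak
  saturation number of the clique: the image of a weakly saturating set spans W \<union> Z, and
  together with the edges avoiding W it spans everything.\<close>

lemma mrank_induced_le_remove_clique:
  assumes U: "A \<subseteq> U" "U \<subseteq> {..<n}" and W: "W \<subseteq> U - A"
    and \<beta>: "inj_on \<beta> {..<N}" "clique (\<beta> ` {..<N}) G" "\<beta> ` {..<N} = W \<union> Z"
    and Z: "Z \<subseteq> A" "card Z = card VF"
    and H: "wsat_process N (all_edges N) VF EF H"
  shows "mrank I (induced_edges G U) \<le> mrank I (induced_edges G (U - W)) + card H"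
proof -
  define X where "X = induced_edges G (U - W) \<union> (\<lambda>e. \<beta> ` e) ` H"
  have H_sub: "H \<subseteq> all_edges N"
    using H unfolding wsat_process_def by blast
  have \<beta>_range: "\<beta> ` {..<N} \<subseteq> {..<n}"
    using \<beta>(3) W Z U A_sub by blast
  have X_sub: "X \<subseteq> G"
    unfolding X_def induced_edges_def using H_sub clique_image_edge[OF \<beta>(1,2)] by blast
  interpret clique_extension n G VF EF I x y A Z0 U W Z X
  proof unfold_locales
    show "clique (W \<union> Z) G"
      using \<beta>(2,3) by simp
    show "spans I X {q, q'}" if q: "q \<in> W \<union> Z" "q' \<in> W \<union> Z" "q \<noteq> q'" for q q'
    proof -
      obtain i j where ij: "i < N" "j < N" "q = \<beta> i" "q' = \<beta> j"
        using q(1,2) \<beta>(3) by (metis imageE lessThan_iff)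
      then have ij_edge: "{i, j} \<in> all_edges N"
        using q(3) unfolding all_edges_def by blast
      have "(\<lambda>e. \<beta> ` e) ` H \<subseteq> X"
        unfolding X_def by blast
      then show ?thesis
        using spans_clique_edges[OF H \<beta>(1) \<beta>_range \<beta>(2) X_sub _ ij_edge] ij by simp
    qed
  qed (use U W Z X_sub in \<open>auto simp: X_def\<close>)
  have "mrank I (induced_edges G U) \<le> mrank I X"
    using spans_induced_edges by (intro mrank_le_if_spans[OF matroid]) (auto simp: induced_edges_def)
  also have "\<dots> \<le> mrank I (induced_edges G (U - W)) + card ((\<lambda>e. \<beta> ` e) ` H)"
    unfolding X_def using X_sub unfolding X_def by (intro mrank_Un_le[OF matroid]) auto
  also have "card ((\<lambda>e. \<beta> ` e) ` H) \<le> card H"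
    using H_sub finite_subset[OF H_sub finite_all_edges] by (intro card_image_le) auto
  finally show ?thesis
    by simp
qed

end

lemma ramsey_clique_indep:
  fixes V :: "'a set" and E :: "'a set set"
  assumes "finite V" "(m + l) choose m \<le> card V"
  shows "\<exists>R\<subseteq>V. card R = m \<and> clique R E \<or> card R = l \<and> indep R E"
proof -
  let ?N = "(m + l) choose m"
  have N: "partn_lst {..<?N} [m, l] 2"
    using ramsey2_full[of 2 m l] by (simp add: ES2_choose)
  obtain v where v: "v ` {..<?N} \<subseteq> V" "inj_on v {..<?N}"
    using card_le_inj[of "{..<?N}" V] assms by auto
  define f where "f e = (if v ` e \<in> E then 0 else Suc 0)" for e
  have "f \<in> nsets {..<?N} 2 \<rightarrow> {..<Suc (Suc 0)}"
    by (simp add: f_def)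
  then obtain i U where i: "i < 2" and fU: "f ` nsets U 2 \<subseteq> {i}" and U: "U \<in> nsets {..<?N} ([m, l] ! i)"
    using N numeral_2_eq_2 by (auto simp: partn_lst_def monochromatic_def)
  show ?thesis
  proof (intro exI conjI)
    show "v ` U \<subseteq> V"
      using U v by (auto simp: image_subset_iff nsets_def)
    show "card (v ` U) = m \<and> clique (v ` U) E \<or> card (v ` U) = l \<and> indep (v ` U) E"
      using i unfolding numeral_2_eq_2
      using fU U v unfolding image_subset_iff nsets_2_eq clique_def indep_def less_Suc_eq
      by (auto simp: f_def nsets_def card_image inj_on_subset split: if_splits)
  qed
qed

lemma clique_extends_into:
  assumes ext: "extension_property n G A {..<m + s} (all_edges (m + s)) {..<m}"
    and W: "W \<subseteq> {..<n}" "card W = m" "clique W G"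
  obtains \<beta> Z where "inj_on \<beta> {..<m + s}" "clique (\<beta> ` {..<m + s}) G"
    "\<beta> ` {..<m + s} = W \<union> Z" "Z \<subseteq> A" "card Z = s"
proof -
  obtain \<gamma> where \<gamma>: "bij_betw \<gamma> {..<m} W"
    using ex_bij_betw_nat_finite[of W] finite_subset[OF W(1) finite_lessThan] W(2) by (auto simp: atLeast0LessThan)
  have "inj_on \<gamma> {..<m}" "\<gamma> ` {..<m} \<subseteq> {..<n}"
    using \<gamma> W(1) by (auto simp: bij_betw_def)
  then obtain \<beta> where \<beta>: "inj_on \<beta> {..<m + s}" "\<And>i. i \<in> {..<m} \<Longrightarrow> \<beta> i = \<gamma> i"
    "\<beta> ` ({..<m + s} - {..<m}) \<subseteq> A - \<gamma> ` {..<m}"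
    "\<And>e. e \<in> all_edges (m + s) \<Longrightarrow> \<not> e \<subseteq> {..<m} \<Longrightarrow> \<beta> ` e \<in> G"
    using extendableE[OF ext] by blast
  define Z where "Z = \<beta> ` {m..<m + s}"
  have W_eq: "\<beta> ` {..<m} = W"
    using \<beta>(2) bij_betw_imp_surj_on[OF \<gamma>] by (metis image_cong)
  have WZ: "\<beta> ` {..<m + s} = W \<union> Z"
    unfolding Z_def W_eq[symmetric] by (auto simp: image_Un[symmetric] ivl_disj_un_one(2)[symmetric])
  have "inj_on \<beta> {m..<m + s}"
    using \<beta>(1) by (rule inj_on_subset) auto
  then have Z: "Z \<subseteq> A" "card Z = s"
    using \<beta>(3) unfolding Z_def by (force, simp add: card_image)
  have "clique (\<beta> ` {..<m + s}) G"
    unfolding clique_def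
  proof (intro ballI impI)
    fix q q' assume "q \<in> \<beta> ` {..<m + s}" "q' \<in> \<beta> ` {..<m + s}" "q \<noteq> q'"
    then obtain i j where ij: "i < m + s" "j < m + s" "i \<noteq> j" "q = \<beta> i" "q' = \<beta> j"
      by auto
    show "{q, q'} \<in> G"
    proof (cases "i < m \<and> j < m")
      case True
      then show ?thesis
        using W(3) W_eq ij \<open>q \<noteq> q'\<close> unfolding clique_def by blast
    next
      case False
      then have "\<beta> ` {i, j} \<in> G"
        using \<beta>(4)[of "{i, j}"] ij unfolding all_edges_def by auto
      then show ?thesis
        using ij by simp
    qed
  qed
  then show ?thesis
    using that \<beta>(1) WZ Z by blast
qed

context core_setting
begin

text \<open>Otherwise Ramsey's theorem yields an m-clique W outside A all of whose vertices have
  marginal rank above k. Extending it by card VF vertices of A to a clique, the lower bound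
  on the rank lost by deleting W contradicts the upper bound card H < (k + 1) m.\<close>

lemma exists_low_marginal_vertex:
  assumes ext_clique: "extension_property n G A {..<m + card VF} (all_edges (m + card VF)) {..<m}"
    and indep: "no_indep_of_size n G L"
    and H: "wsat_process (m + card VF) (all_edges (m + card VF)) VF EF H" "card H < (k + 1) * m"
    and U: "A \<subseteq> U" "U \<subseteq> {..<n}" "(m + L) choose m \<le> card (U - A)"
  shows "\<exists>v\<in>U - A. mrank I (induced_edges G U) - mrank I (induced_edges G (U - {v})) \<le> k"
proof (rule ccontr)
  let ?s = "card VF"
  assume not_low: "\<not> ?thesis"
  have high: "k + 1 \<le> mrank I (induced_edges G U) - mrank I (induced_edges G (U - {v}))"
    if "v \<in> U - A" for v
  proof -
    have "\<not> mrank I (induced_edges G U) - mrank I (induced_edges G (U - {v})) \<le> k"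
      using that not_low by blast
    then show ?thesis
      by simp
  qed
  have fin: "finite (U - A)"
    using U(2) finite_subset by blast
  obtain W where W: "W \<subseteq> U - A" "card W = m" "clique W G"
  proof -
    obtain R where R: "R \<subseteq> U - A" "card R = m \<and> clique R G \<or> card R = L \<and> indep R G"
      using ramsey_clique_indep[OF fin U(3)] by blast
    moreover have "\<not> (card R = L \<and> indep R G)"
      using indep R(1) U(2) unfolding no_indep_of_size_def by blast
    ultimately show ?thesis
      using that by blast
  qed
  obtain \<beta> Z where \<beta>: "inj_on \<beta> {..<m + ?s}" "clique (\<beta> ` {..<m + ?s}) G"
    "\<beta> ` {..<m + ?s} = W \<union> Z" and Z: "Z \<subseteq> A" "card Z = ?s"
    using clique_extends_into[OF ext_clique _ W(2,3)] W(1) U(2) by blast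
  have "mrank I (induced_edges G U) \<le> mrank I (induced_edges G (U - W)) + card H"
    using mrank_induced_le_remove_clique[OF U(1,2) W(1) \<beta> Z H(1)] .
  moreover have "mrank I (induced_edges G (U - W))
      + (\<Sum>w\<in>W. mrank I (induced_edges G U) - mrank I (induced_edges G (U - {w})))
      \<le> mrank I (induced_edges G U)"
    using sum_marginals_le[OF U(1,2) W(1)] finite_subset[OF W(1) fin] by blast
  moreover have "(k + 1) * m \<le> (\<Sum>w\<in>W. mrank I (induced_edges G U) - mrank I (induced_edges G (U - {w})))"
  proof -
    have "(\<Sum>w\<in>W. k + 1) \<le> (\<Sum>w\<in>W. mrank I (induced_edges G U) - mrank I (induced_edges G (U - {w})))"
      using high W(1) by (intro sum_mono) blast
    then show ?thesis
      using W(2) by (simp add: mult.commute)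
  qed
  ultimately show False
    using H(2) by linarith
qed

end

lemma card_induced_edges_le: "G \<subseteq> all_edges n \<Longrightarrow> finite U \<Longrightarrow> card (induced_edges G U) \<le> card U ^ 2"
proof -
  assume G: "G \<subseteq> all_edges n" and U: "finite U"
  have "induced_edges G U \<subseteq> {e. e \<subseteq> U \<and> card e = 2}"
  proof
    fix e assume "e \<in> induced_edges G U"
    then obtain a b where "a \<noteq> b" "e = {a, b}" "e \<subseteq> U"
      using G unfolding induced_edges_def all_edges_def by blast
    then show "e \<in> {e. e \<subseteq> U \<and> card e = 2}"
      by simp
  qed
  then have "card (induced_edges G U) \<le> card {e. e \<subseteq> U \<and> card e = 2}"
    using U by (intro card_mono) (auto intro: finite_subset[of _ "Pow U"])
  also have "\<dots> = card U choose 2"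
    using n_subsets[OF U] by simp
  also have "\<dots> \<le> card U ^ 2"
    by (rule choose_le_pow)
  finally show ?thesis .
qed

context wsat_matroid
begin

text \<open>Peel off vertices outside A of marginal rank at most k while at least R of them remain;
  what is left has fewer than card A + R vertices.\<close>

lemma mrank_induced_le_peeling:
  assumes low: "\<And>U. A \<subseteq> U \<Longrightarrow> U \<subseteq> {..<n} \<Longrightarrow> R \<le> card (U - A) \<Longrightarrow>
      \<exists>v\<in>U - A. mrank I (induced_edges G U) - mrank I (induced_edges G (U - {v})) \<le> k"
    and U: "A \<subseteq> U" "U \<subseteq> {..<n}"
  shows "mrank I (induced_edges G U) \<le> k * card (U - A) + (card A + R) ^ 2"
  using U
proof (induction "card (U - A)" arbitrary: U rule: less_induct)
  case less
  have fin: "finite U" "finite A"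
    using less.prems by (meson finite_lessThan finite_subset)+
  show ?case
  proof (cases "card (U - A) < R")
    case True
    have "card U = card A + card (U - A)"
      using less.prems(1) fin by (simp add: card_Diff_subset card_mono)
    have "mrank I (induced_edges G U) \<le> card (induced_edges G U)"
      by (rule mrank_le_card[OF matroid]) (auto simp: induced_edges_def)
    also have "\<dots> \<le> card U ^ 2"
      by (rule card_induced_edges_le[OF G_edges fin(1)])
    also have "\<dots> \<le> (card A + R) ^ 2"
      using \<open>card U = card A + card (U - A)\<close> True by (intro power_mono) auto
    finally show ?thesis
      by linarith
  next
    case False
    then obtain v where v: "v \<in> U - A"
      "mrank I (induced_edges G U) - mrank I (induced_edges G (U - {v})) \<le> k"
      using low less.prems by (meson not_le)
    have "U - {v} - A = (U - A) - {v}"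
      by blast
    then have "card (U - {v} - A) = card (U - A) - 1" "0 < card (U - A)"
      using v(1) fin by (auto simp: card_gt_0_iff)
    moreover have "mrank I (induced_edges G (U - {v})) \<le> k * (card (U - A) - 1) + (card A + R) ^ 2"
      using less.hyps[of "U - {v}"] less.prems v(1) calculation by auto
    moreover have "k * (card (U - A) - 1) + k = k * card (U - A)"
      using calculation(2) by (cases "card (U - A)") auto
    ultimately show ?thesis
      using v(2) by linarith
  qed
qed

end

lemma (in core_setting) mrank_le:
  assumes ext_clique: "extension_property n G A {..<m + card VF} (all_edges (m + card VF)) {..<m}"
    and indep: "no_indep_of_size n G L"
    and H: "wsat_process (m + card VF) (all_edges (m + card VF)) VF EF H" "card H < (k + 1) * m"
  shows "mrank I G \<le> k * n + (card A + ((m + L) choose m)) ^ 2"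
proof -
  have "mrank I (induced_edges G {..<n}) \<le> k * card ({..<n} - A) + (card A + ((m + L) choose m)) ^ 2"
    using exists_low_marginal_vertex[OF ext_clique indep H] A_sub by (intro mrank_induced_le_peeling) auto
  moreover have "induced_edges G {..<n} = G"
    using G_edges unfolding induced_edges_def all_edges_def by auto
  moreover have "k * card ({..<n} - A) \<le> k * n"
    by (simp add: card_Diff_subset[OF _ A_sub] finite_subset[OF A_sub])
  ultimately show ?thesis
    by (metis add_le_mono1 order.trans)
qed

lemma rk_sat_le:
  assumes "G \<subseteq> all_edges n" "\<And>I. weakly_sat_matroid n G VF EF I \<Longrightarrow> mrank I G \<le> B"
  shows "rk_sat n G VF EF \<le> B"
proof -
  let ?S = "{mrank I G | I. weakly_sat_matroid n G VF EF I}"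
  have fin: "finite G"
    by (rule finite_subset[OF assms(1) finite_all_edges])
  have "?S \<subseteq> (\<lambda>I. mrank I G) ` Pow (Pow G)"
  proof
    fix r assume "r \<in> ?S"
    then obtain I where "weakly_sat_matroid n G VF EF I" "r = mrank I G"
      by blast
    then show "r \<in> (\<lambda>I. mrank I G) ` Pow (Pow G)"
      unfolding weakly_sat_matroid_def matroid_def by blast
  qed
  then have "finite ?S"
    by (rule finite_subset) (simp add: fin)
  moreover have "mrank {{}} X = 0" for X :: "nat set set"
  proof -
    have "{card Y | Y. Y \<in> {{}} \<and> Y \<subseteq> X} = {0}"
      by auto
    then show ?thesis
      unfolding mrank_def by simp
  qed
  then have "weakly_sat_matroid n G VF EF {{}}"
    unfolding weakly_sat_matroid_def matroid_def using fin by auto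
  then have "mrank {{}} G \<in> ?S"
    by blast
  ultimately show ?thesis
    unfolding rk_sat_def using assms(2) by (intro Max.boundedI) auto
qed

section \<open>The rank bound with high probability\<close>

lemma eventually_core_size_le:
  assumes p: "0 < p" "p < 1"
  shows "eventually (\<lambda>n. (real (log_sq n) + real ((m + indep_bound p n) choose m)) ^ 2
    \<le> ln (real n) ^ (4 * m + 8)) sequentially"
proof -
  define \<gamma> where "\<gamma> = 4 / (- ln (1 - p))"
  have "0 < \<gamma>"
    unfolding \<gamma>_def using p by simp
  have "eventually (\<lambda>n. real m + \<gamma> * ln (real n) + 3 \<le> ln (real n) ^ 2) sequentially"
    by real_asymp
  moreover have "eventually (\<lambda>n. 3 \<le> ln (real n)) sequentially"
    by real_asymp
  ultimately show ?thesis
  proof eventually_elim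
    case (elim n)
    define y where "y = ln (real n)"
    have y: "3 \<le> y" "1 \<le> y"
      using elim unfolding y_def by auto
    have "0 \<le> \<gamma> * y"
      using \<open>0 < \<gamma>\<close> y by simp
    then have "real (nat \<lceil>\<gamma> * y\<rceil>) \<le> \<gamma> * y + 1"
      by linarith
    then have "real (indep_bound p n) \<le> \<gamma> * y + 3"
      unfolding indep_bound_def \<gamma>_def[symmetric] y_def[symmetric] by simp
    then have "real (m + indep_bound p n) \<le> y ^ 2"
      using elim unfolding y_def by simp
    then have "real (m + indep_bound p n) ^ m \<le> (y ^ 2) ^ m"
      by (intro power_mono) auto
    moreover have "real ((m + indep_bound p n) choose m) \<le> real (m + indep_bound p n) ^ m"
      using choose_le_pow[of "m + indep_bound p n" m] by (metis of_nat_le_iff of_nat_power)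
    ultimately have "real ((m + indep_bound p n) choose m) \<le> (y ^ 2) ^ m"
      by linarith
    moreover have "real (log_sq n) \<le> y ^ 2 + 1"
      using log_sq_bounds(2) unfolding y_def .
    moreover have "(y ^ 2) ^ m \<le> y ^ (2 * m + 2)"
      unfolding power_mult[symmetric] by (rule power_increasing) (use y in auto)
    moreover have "y ^ 2 \<le> y ^ (2 * m + 2)"
      by (rule power_increasing) (use y in auto)
    moreover have "1 \<le> y ^ (2 * m + 2)"
      by (rule one_le_power) (use y in auto)
    ultimately have "real (log_sq n) + real ((m + indep_bound p n) choose m) \<le> 3 * y ^ (2 * m + 2)"
      by linarith
    then have "(real (log_sq n) + real ((m + indep_bound p n) choose m)) ^ 2 \<le> (3 * y ^ (2 * m + 2)) ^ 2"
      by (intro power_mono) auto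
    also have "\<dots> = 9 * (y ^ (2 * m + 2)) ^ 2"
      by (simp add: power_mult_distrib)
    also have "\<dots> \<le> y ^ 4 * (y ^ (2 * m + 2)) ^ 2"
      using power_mono[of 3 y 4] y by (intro mult_right_mono) auto
    also have "\<dots> = y ^ (4 * m + 8)"
    proof -
      have "4 * m + 8 = 4 + (2 * m + 2) * 2"
        by simp
      then show ?thesis
        by (simp only: power_add power_mult)
    qed
    finally show ?case
      unfolding y_def .
  qed
qed

lemma is_graph_all_edges: "is_graph {..<N} (all_edges N)"
  unfolding is_graph_def all_edges_def by auto

lemma is_graph_add_bipartite:
  assumes "is_graph V E" "finite Z" "V \<inter> Z = {}" "N \<subseteq> V"
  shows "is_graph (V \<union> Z) (E \<union> bipartite_edges Z N)"
  using assms unfolding is_graph_def bipartite_edges_def by blast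

lemma rk_sat_le_whp:
  assumes p: "0 < p" "p < 1" and F: "is_graph VF EF" and xy: "{x, y} \<in> EF" "x \<noteq> y"
    and H: "wsat_process (m + card VF) (all_edges (m + card VF)) VF EF H" "card H < (k + 1) * m"
  shows "whp p (\<lambda>n G. real (rk_sat n G VF EF) \<le> real k * real n + ln (real n) powr real (4 * m + 8))"
proof -
  let ?N = "neighbours EF x"
  let ?s = "card VF"
  obtain Z0 where Z0: "finite Z0" "card Z0 = ?s" "Z0 \<subseteq> - VF"
    using infinite_arbitrarily_large[of "- VF"] is_graph_finite(1)[OF F] by auto
  have Z0_disj: "VF \<inter> Z0 = {}"
    using Z0(3) by blast
  have S: "{x, y} \<subseteq> VF" "insert x ?N \<subseteq> VF" "{x, y} \<union> Z0 \<subseteq> VF \<union> Z0"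
    using is_graph_edge_subset[OF F xy(1)] neighbours_graph[OF F] by auto
  define good where "good n G \<longleftrightarrow>
      extension_property n G {..<log_sq n} VF EF {x, y} \<and>
      extension_property n G {..<log_sq n} VF EF (insert x ?N) \<and>
      extension_property n G {..<log_sq n} (VF \<union> Z0)
        (EF \<union> bipartite_edges Z0 (?N - {y})) ({x, y} \<union> Z0) \<and>
      extension_property n G {..<log_sq n} {..<m + ?s} (all_edges (m + ?s)) {..<m} \<and>
      no_indep_of_size n G (indep_bound p n)" for n G
  have good_whp: "whp p good"
    unfolding good_def using p F
    by (intro whp_conj extension_property_whp no_indep_whp S is_graph_all_edges
        is_graph_add_bipartite[OF F Z0(1) Z0_disj]) (use neighbours_graph[OF F] in auto)
  have good_bound: "eventually (\<lambda>n. \<forall>G \<subseteq> all_edges n. good n G \<longrightarrow>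
      real (rk_sat n G VF EF) \<le> real k * real n + ln (real n) powr real (4 * m + 8)) sequentially"
    using eventually_log_sq_le eventually_core_size_le[OF p, of m] eventually_ge_at_top[of 2]
  proof eventually_elim
    case (elim n)
    let ?R = "(m + indep_bound p n) choose m"
    show ?case
    proof (intro allI impI)
      fix G assume G: "G \<subseteq> all_edges n" "good n G"
      have "rk_sat n G VF EF \<le> k * n + (log_sq n + ?R) ^ 2"
      proof (rule rk_sat_le[OF G(1)])
        fix I assume "weakly_sat_matroid n G VF EF I"
        then interpret core_setting n G VF EF I x y "{..<log_sq n}" Z0
          using G F xy Z0(1,2) Z0_disj elim(1) unfolding good_def
          by unfold_locales auto
        show "mrank I G \<le> k * n + (log_sq n + ?R) ^ 2"
          using mrank_le[OF _ _ H] G(2) unfolding good_def by simp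
      qed
      then have "real (rk_sat n G VF EF) \<le> real k * real n + (real (log_sq n) + real ?R) ^ 2"
        by (metis of_nat_add of_nat_le_iff of_nat_mult of_nat_power)
      also have "\<dots> \<le> real k * real n + ln (real n) ^ (4 * m + 8)"
        using elim(2) by simp
      also have "ln (real n) ^ (4 * m + 8) = ln (real n) powr real (4 * m + 8)"
        using elim(3) by (intro powr_realpow[symmetric]) simp
      finally show "real (rk_sat n G VF EF) \<le> real k * real n + ln (real n) powr real (4 * m + 8)" .
    qed
  qed
  show ?thesis
    using p
    by (intro whp_mono[OF _ _ good_whp good_bound]) auto
qed

lemma wsat_process_complete: "wsat_process N (all_edges N) VF EF (all_edges N)"
  unfolding wsat_process_def by (intro conjI exI[of _ "[]"]) auto

lemma wsat_attained:
  obtains H where "wsat_process N (all_edges N) VF EF H" "card H = wsat N (all_edges N) VF EF"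
  using LeastI_ex[of "\<lambda>k. \<exists>H. wsat_process N (all_edges N) VF EF H \<and> card H = k"]
    wsat_process_complete that unfolding wsat_def by blast

lemma wsat_no_edges: "wsat N (all_edges N) VF {} = N choose 2"
proof -
  have only_complete: "H = all_edges N" if H: "wsat_process N (all_edges N) VF {} H" for H
  proof -
    obtain es where es: "H \<subseteq> all_edges N" "set es = all_edges N - H"
      "\<forall>i < length es. \<exists>C \<in> copies N VF {} (H \<union> set (take (Suc i) es)). es ! i \<in> C"
      using H unfolding wsat_process_def by blast
    have "copies N VF {} S \<subseteq> {{}}" for S
      unfolding copies_def by auto
    then have "es = []"
      using es(3) by (metis empty_iff length_greater_0_conv singletonD subsetD)
    then show ?thesis
      using es(1,2) by auto
  qed
  have "wsat N (all_edges N) VF {} = card (all_edges N)"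
    unfolding wsat_def
  proof (rule Least_equality)
    show "\<exists>H. wsat_process N (all_edges N) VF {} H \<and> card H = card (all_edges N)"
      using wsat_process_complete by blast
  qed (use only_complete in blast)
  moreover have "all_edges N = {e. e \<subseteq> {..<N} \<and> card e = 2}"
    unfolding all_edges_def by (auto simp: card_2_iff)
  ultimately show ?thesis
    using n_subsets[of "{..<N}" 2] by simp
qed

text \<open>Without edges nothing can be added, so the weak saturation number of K_N is
  N choose 2, which is not O(N).\<close>

lemma wsat_linear_imp_edges:
  assumes "(\<lambda>N. real (wsat N (all_edges N) VF EF) / real N) \<longlonglongrightarrow> c"
  shows "EF \<noteq> {}"
proof
  assume "EF = {}"
  have "eventually (\<lambda>N. 0 < N) sequentially"
    by (rule eventually_gt_at_top)
  then have eq: "eventually (\<lambda>N. (real N - 1) / 2 = real (wsat N (all_edges N) VF EF) / real N) sequentially"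
    by eventually_elim (simp add: \<open>EF = {}\<close> wsat_no_edges real_choose_two)
  have "filterlim (\<lambda>N. (real N - 1) / 2) at_top sequentially"
    by real_asymp
  then have "filterlim (\<lambda>N. real (wsat N (all_edges N) VF EF) / real N) at_top sequentially"
    unfolding filterlim_cong[OF refl refl eq] .
  then have "filterlim (\<lambda>N. real (wsat N (all_edges N) VF EF) / real N) at_infinity sequentially"
    by (rule filterlim_at_top_imp_at_infinity)
  then show False
    using not_tendsto_and_filterlim_at_infinity[OF _ assms] by simp
qed

lemma exists_small_wsat:
  assumes lim: "(\<lambda>N. real (wsat N (all_edges N) VF EF) / real N) \<longlonglongrightarrow> c" and c: "c < real k + 1"
  obtains m H where "wsat_process (m + s) (all_edges (m + s)) VF EF H" "card H < (k + 1) * m"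
proof -
  define c' where "c' = (c + real k + 1) / 2"
  have "c < c'" "c' < real k + 1"
    unfolding c'_def using c by auto
  have "eventually (\<lambda>N. real (wsat N (all_edges N) VF EF) / real N < c') sequentially"
    using order_tendstoD(2)[OF lim \<open>c < c'\<close>] .
  then have "eventually (\<lambda>m. real (wsat (m + s) (all_edges (m + s)) VF EF) / real (m + s) < c') sequentially"
    by (rule eventually_sequentially_seg[THEN iffD2])
  moreover have "eventually (\<lambda>m. c' * real (m + s) < (real k + 1) * real m) sequentially"
    using \<open>c' < real k + 1\<close> by real_asymp
  moreover have "eventually (\<lambda>m. 0 < m) sequentially"
    by (rule eventually_gt_at_top)
  ultimately have "eventually (\<lambda>m. real (wsat (m + s) (all_edges (m + s)) VF EF) / real (m + s) < c'
      \<and> c' * real (m + s) < (real k + 1) * real m \<and> 0 < m) sequentially"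
    by eventually_elim blast
  then obtain m where m: "real (wsat (m + s) (all_edges (m + s)) VF EF) / real (m + s) < c'"
      "c' * real (m + s) < (real k + 1) * real m" "0 < m"
    using eventually_happens'[OF trivial_limit_sequentially] by blast
  obtain H where H: "wsat_process (m + s) (all_edges (m + s)) VF EF H"
    "card H = wsat (m + s) (all_edges (m + s)) VF EF"
    by (rule wsat_attained)
  have "real (card H) < c' * real (m + s)"
    using m(1,3) H(2) by (simp add: divide_less_eq)
  then have "real (card H) < real ((k + 1) * m)"
    using m(2) by (simp add: algebra_simps)
  then have "card H < (k + 1) * m"
    by (simp only: of_nat_less_iff)
  then show ?thesis
    using that H(1) by blast
qed

theorem theorem4:
  fixes p :: real and VF :: "nat set" and EF :: "nat set set" and cF :: real
  assumes "0 < p" and "p < 1"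
    and "is_graph VF EF"
    and "cF \<ge> 0"
    and "(\<lambda>n. real (wsat n (all_edges n) VF EF) / real n) \<longlonglongrightarrow> cF"
  shows "\<exists>D::real. (\<lambda>n. prob_Gnp n p
           (\<lambda>G. real (rk_sat n G VF EF) \<le> of_int \<lfloor>cF\<rfloor> * real n + ln (real n) powr D))
         \<longlonglongrightarrow> 1"
proof -
  define k where "k = nat \<lfloor>cF\<rfloor>"
  have k: "real k = of_int \<lfloor>cF\<rfloor>" "cF < real k + 1"
    unfolding k_def using assms(4) by linarith+
  obtain x y where xy: "{x, y} \<in> EF" "x \<noteq> y"
    using wsat_linear_imp_edges[OF assms(5)] is_graph_edge[OF assms(3)] by blast
  obtain m H where H: "wsat_process (m + card VF) (all_edges (m + card VF)) VF EF H" "card H < (k + 1) * m"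
    using exists_small_wsat[OF assms(5) k(2)] .
  have "whp p (\<lambda>n G. real (rk_sat n G VF EF) \<le> real k * real n + ln (real n) powr real (4 * m + 8))"
    by (rule rk_sat_le_whp[OF assms(1,2,3) xy H])
  then show ?thesis
    unfolding whp_def k(1) by blast
qed

end
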